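(* Let $\Omega$ be a topological space, let $T_1,\dots,T_\gamma:\Omega\to\Omega$ be commuting homeomorphisms, write $T^n=T_1^{n_1}\cdots T_\gamma^{n_\gamma}$ for $n\in\mathbb{Z}^\gamma$, and assume the $\mathbb{Z}^\gamma$-action $n\mapsto T^n$ is minimal. Let $f:\Omega\to\mathbb{R}$ be continuous and for $\omega\in\Omega$ define $H_\omega$ on $\ell^2(\mathbb{Z}^\gamma)$ by $(H_\omega u)(n)=\sum_{|m-n|=1}u(m)+f(T^n\omega)u(n)$. If $H_{\omega}$ has uniformly localized eigenfunctions (ULE) for a single $\omega\in\Omega$, then $H_\omega$ has homogeneous ULE in $\Omega$: there exist $\alpha>0$, $C>0$ independent of $\omega$ such that for every $\omega\in\Omega$, $H_\omega$ has a complete orthonormal set of eigenfunctions $\{\phi^\omega_n\}$ and points $m^\omega_n\in\mathbb{Z}^\gamma$ with $|\phi^\omega_n(m)|\le Ce^{-\alpha|m-m^\omega_n|}$ for all $n,m$.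
   Context: Minimal means every orbit $\{T^n\omega:n\in\mathbb{Z}^\gamma\}$ is dense in $\Omega$. $|\cdot|$ denotes the norm on $\mathbb{Z}^\gamma$. A self-adjoint operator $H$ on $\ell^2(\mathbb{Z}^\gamma)$ has ULE if it has a complete orthonormal set of eigenfunctions $\{\phi_n\}$ and there exist $\alpha>0$, $C>0$ and points $m_n\in\mathbb{Z}^\gamma$ such that $|\phi_n(m)|\le Ce^{-\alpha|m-m_n|}$ for all $n,m$. *)

theory Defs
  imports "HOL-Analysis.Analysis"
begin

text \<open>Lattice points of Z^gamma are functions 'd => int with 'd a finite index type
  (gamma = CARD('d)).  The norm on Z^gamma is the l^1 norm.\<close>

definition znorm :: "('d::finite \<Rightarrow> int) \<Rightarrow> real" where
  "znorm n = (\<Sum>i\<in>UNIV. real_of_int \<bar>n i\<bar>)"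

text \<open>Integer iterate of a map (for a bijection, inv is its inverse).\<close>
definition iter_int :: "('a \<Rightarrow> 'a) \<Rightarrow> int \<Rightarrow> 'a \<Rightarrow> 'a" where
  "iter_int g k = (if 0 \<le> k then g ^^ nat k else (inv g) ^^ nat (- k))"

definition Tpow :: "('d::finite \<Rightarrow> 'a \<Rightarrow> 'a) \<Rightarrow> ('d \<Rightarrow> int) \<Rightarrow> 'a \<Rightarrow> 'a" where
  "Tpow T n = Finite_Set.fold (\<lambda>i h. iter_int (T i) (n i) \<circ> h) id UNIV"

definition minimal_action :: "('d::finite \<Rightarrow> 'a::topological_space \<Rightarrow> 'a) \<Rightarrow> bool" where
  "minimal_action T \<longleftrightarrow> (\<forall>\<omega>. closure {Tpow T n \<omega> | n. True} = UNIV)"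

definition schr_op :: "('a \<Rightarrow> real) \<Rightarrow> ('d::finite \<Rightarrow> 'a \<Rightarrow> 'a) \<Rightarrow> 'a
    \<Rightarrow> (('d \<Rightarrow> int) \<Rightarrow> complex) \<Rightarrow> ('d \<Rightarrow> int) \<Rightarrow> complex" where
  "schr_op f T \<omega> u n = (\<Sum>m\<in>{m. znorm (m - n) = 1}. u m) + complex_of_real (f (Tpow T n \<omega>)) * u n"

definition l2 :: "(('d::finite \<Rightarrow> int) \<Rightarrow> complex) \<Rightarrow> bool" where
  "l2 u \<longleftrightarrow> (\<lambda>n. (cmod (u n))\<^sup>2) summable_on UNIV"

definition l2_inner :: "(('d::finite \<Rightarrow> int) \<Rightarrow> complex) \<Rightarrow> (('d \<Rightarrow> int) \<Rightarrow> complex) \<Rightarrow> complex" where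
  "l2_inner u v = (\<Sum>\<^sub>\<infinity>n. u n * cnj (v n))"

definition complete_orthonormal :: "(('d::finite \<Rightarrow> int) \<Rightarrow> complex) set \<Rightarrow> bool" where
  "complete_orthonormal B \<longleftrightarrow>
     (\<forall>u\<in>B. l2 u) \<and>
     (\<forall>u\<in>B. \<forall>v\<in>B. l2_inner u v = (if u = v then 1 else 0)) \<and>
     (\<forall>v. l2 v \<and> (\<forall>u\<in>B. l2_inner v u = 0) \<longrightarrow> v = (\<lambda>_. 0))"

definition is_eigenfunction :: "((('d::finite \<Rightarrow> int) \<Rightarrow> complex) \<Rightarrow> ('d \<Rightarrow> int) \<Rightarrow> complex)
    \<Rightarrow> (('d \<Rightarrow> int) \<Rightarrow> complex) \<Rightarrow> bool" where
  "is_eigenfunction H u \<longleftrightarrow> l2 u \<and> u \<noteq> (\<lambda>_. 0) \<and> (\<exists>E. \<forall>n. H u n = E * u n)"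

definition ULE_with :: "real \<Rightarrow> real \<Rightarrow> ((('d::finite \<Rightarrow> int) \<Rightarrow> complex) \<Rightarrow> ('d \<Rightarrow> int) \<Rightarrow> complex) \<Rightarrow> bool" where
  "ULE_with \<alpha> C H \<longleftrightarrow>
     (\<exists>B c. complete_orthonormal B \<and> (\<forall>\<phi>\<in>B. is_eigenfunction H \<phi>) \<and>
        (\<forall>\<phi>\<in>B. \<forall>m. cmod (\<phi> m) \<le> C * exp (- \<alpha> * znorm (m - c \<phi>))))"

definition has_ULE :: "((('d::finite \<Rightarrow> int) \<Rightarrow> complex) \<Rightarrow> ('d \<Rightarrow> int) \<Rightarrow> complex) \<Rightarrow> bool" where
  "has_ULE H \<longleftrightarrow> (\<exists>\<alpha>>0. \<exists>C>0. ULE_with \<alpha> C H)"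

end

theory Submission
  imports Defs "HOL-Library.Function_Algebras"
begin

text \<open>By minimality there are \<open>s\<^sub>k\<close> with \<open>T\<^bsup>s\<^sub>k\<^esup> \<omega>\<^sub>0 \<rightarrow> \<omega>\<close>, so the potentials
  \<open>n \<mapsto> f (T\<^bsup>n + s\<^sub>k\<^esup> \<omega>\<^sub>0)\<close> converge pointwise to the potential of \<open>H\<^sub>\<omega>\<close>, and translating
  the ULE eigenbasis of \<open>H\<^bsub>\<omega>\<^sub>0\<^esub>\<close> by \<open>s\<^sub>k\<close> yields eigenbases of the shifted operators with the
  same constants \<open>\<alpha>, C\<close>.

  Label every eigenfunction by its centre and a slot number. A unit vector bounded by
  \<open>C e\<^sup>-\<^sup>\<alpha>\<^sup>|\<^sup>n\<^sup>-\<^sup>z\<^sup>|\<close> keeps mass \<open>1/2\<close> in a fixed window around its centre \<open>z\<close>, and by Bessel's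
  inequality an orthonormal set has mass at most \<open>1\<close> at each point, so each centre carries at
  most \<open>N\<close> eigenfunctions, with \<open>N\<close> independent of everything else. The labelled families are
  uniformly bounded, so a subsequence converges pointwise. The limit inherits the decay bound,
  orthonormality and the eigenvalue equations; completeness is expressed as
  \<open>\<Sum>\<^sub>i \<psi>\<^sub>i(m)\<^sup>* \<psi>\<^sub>i = \<delta>\<^sub>m\<close>, which survives by dominated convergence since the decay bound
  supplies a summable majorant indexed by (centre, slot).\<close>

section \<open>Exponential weights on the lattice\<close>

definition decay :: "real \<Rightarrow> ('d::finite \<Rightarrow> int) \<Rightarrow> real" where
  "decay a n = exp (- a * znorm n)"

lemma znorm_nonneg: "0 \<le> znorm n"
  unfolding znorm_def by (intro sum_nonneg) auto

lemma znorm_minus_commute: "znorm (n - z) = znorm (z - n)"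
  unfolding znorm_def by (intro sum.cong) auto

lemma decay_pos: "0 < decay a n"
  unfolding decay_def by simp

lemma decay_le_1: "0 \<le> a \<Longrightarrow> decay a n \<le> 1"
  unfolding decay_def using znorm_nonneg[of n] by simp

lemma square_le_decay_square:
  assumes "0 \<le> x" "x \<le> C * decay a n"
  shows "x\<^sup>2 \<le> C\<^sup>2 * decay (2 * a) n"
proof -
  have "x\<^sup>2 \<le> (C * decay a n)\<^sup>2" by (rule power_mono[OF assms(2,1)])
  also have "\<dots> = C\<^sup>2 * decay (2 * a) n"
    unfolding decay_def by (simp add: power2_eq_square exp_add[symmetric] algebra_simps)
  finally show ?thesis .
qed

lemma summable_on_exp_abs_int:
  fixes a :: real
  assumes a: "a > 0"
  shows "(\<lambda>k::int. exp (- a * \<bar>real_of_int k\<bar>)) summable_on UNIV"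
proof -
  have geom: "(\<lambda>n::nat. exp (- a * real n)) summable_on UNIV"
  proof -
    have "summable (\<lambda>n::nat. exp (- a) ^ n)" using a by (intro summable_geometric) auto
    hence "summable (\<lambda>n::nat. exp (- a * real n))"
      by (simp add: exp_of_nat_mult[symmetric] mult.commute)
    thus ?thesis by (subst summable_on_UNIV_nonneg_real_iff) auto
  qed
  have pos: "(\<lambda>k::int. exp (- a * \<bar>real_of_int k\<bar>)) summable_on (int ` UNIV)"
    by (subst summable_on_reindex) (use geom in \<open>auto simp: o_def\<close>)
  have neg: "(\<lambda>k::int. exp (- a * \<bar>real_of_int k\<bar>)) summable_on ((\<lambda>n. - int n) ` UNIV)"
    by (subst summable_on_reindex) (use geom in \<open>auto simp: o_def inj_on_def\<close>)
  have "UNIV = int ` UNIV \<union> (\<lambda>n. - int n) ` UNIV"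
    by (auto simp: image_iff) (metis int_cases2)
  thus ?thesis using summable_on_union[OF pos neg] by simp
qed

lemma decay_eq_prod: "decay a n = (\<Prod>i\<in>UNIV. exp (- a * \<bar>real_of_int (n i)\<bar>))"
  by (simp add: decay_def znorm_def sum_distrib_left exp_sum[symmetric])

text \<open>Summability over \<open>\<int>\<^sup>\<gamma>\<close> reduces to the one-dimensional case because the weight
  factorises over the coordinates and every finite set of lattice points lies in a finite box.\<close>

lemma summable_on_decay:
  assumes a: "a > 0"
  shows "decay a summable_on (UNIV :: ('d::finite \<Rightarrow> int) set)"
proof (rule nonneg_bdd_above_summable_on)
  define S where "S = infsum (\<lambda>k::int. exp (- a * \<bar>real_of_int k\<bar>)) UNIV"
  show "bdd_above (sum (decay a) ` {F. F \<subseteq> (UNIV :: ('d \<Rightarrow> int) set) \<and> finite F})"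
  proof (rule bdd_aboveI2)
    fix F :: "('d \<Rightarrow> int) set"
    assume "F \<in> {F. F \<subseteq> UNIV \<and> finite F}"
    hence F: "finite F" by auto
    define G where "G = (\<Union>n\<in>F. range n)"
    have G: "finite G" unfolding G_def using F by auto
    have box: "F \<subseteq> PiE UNIV (\<lambda>_. G)" unfolding G_def by (auto simp: PiE_def)
    have fin: "finite (PiE (UNIV :: 'd set) (\<lambda>_. G))" using G by (intro finite_PiE) auto
    have "sum (decay a) F \<le> sum (decay a) (PiE (UNIV :: 'd set) (\<lambda>_. G))"
      by (intro sum_mono2[OF fin box] less_imp_le[OF decay_pos])
    also have "\<dots> = infsum (\<lambda>g. \<Prod>i\<in>UNIV. exp (- a * \<bar>real_of_int (g i)\<bar>)) (PiE (UNIV :: 'd set) (\<lambda>_. G))"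
      using fin by (simp add: decay_eq_prod)
    also have "\<dots> = (\<Prod>i\<in>(UNIV :: 'd set). infsum (\<lambda>k. exp (- a * \<bar>real_of_int k\<bar>)) G)"
      using G by (intro infsum_prod_PiE_abs) auto
    also have "\<dots> \<le> (\<Prod>i\<in>(UNIV :: 'd set). S)"
    proof (intro prod_mono conjI)
      show "0 \<le> infsum (\<lambda>k. exp (- a * \<bar>real_of_int k\<bar>)) G" by (intro infsum_nonneg) auto
      show "infsum (\<lambda>k. exp (- a * \<bar>real_of_int k\<bar>)) G \<le> S"
        unfolding S_def using summable_on_exp_abs_int[OF a] G by (intro infsum_mono_neutral) auto
    qed
    finally show "sum (decay a) F \<le> (\<Prod>i\<in>(UNIV :: 'd set). S)" .
  qed
qed (simp add: decay_def)

lemma bij_betw_translate: "bij_betw (\<lambda>n::'d::finite \<Rightarrow> int. n + z) UNIV UNIV"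
  by (rule bij_betwI[of _ _ _ "\<lambda>n. n - z"]) auto

lemma bij_betw_translate_diff: "bij_betw (\<lambda>n::'d::finite \<Rightarrow> int. n - z) UNIV UNIV"
  by (rule bij_betwI[of _ _ _ "\<lambda>n. n + z"]) auto

lemma summable_on_translate_iff:
  "(\<lambda>n. g (n - z)) summable_on UNIV \<longleftrightarrow> g summable_on (UNIV :: ('d::finite \<Rightarrow> int) set)"
  by (rule summable_on_reindex_bij_betw[OF bij_betw_translate_diff])

lemma infsum_translate:
  "infsum (\<lambda>n. g (n - z)) UNIV = infsum g (UNIV :: ('d::finite \<Rightarrow> int) set)"
  by (rule infsum_reindex_bij_betw[OF bij_betw_translate_diff])

lemma summable_on_decay_diff: "0 < a \<Longrightarrow> (\<lambda>n. decay a (n - z)) summable_on UNIV"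
  using summable_on_translate_iff summable_on_decay by blast

lemma summable_on_decay_diff': "0 < a \<Longrightarrow> (\<lambda>n. decay a (z - n)) summable_on UNIV"
  using summable_on_decay_diff[of a z] by (simp add: decay_def znorm_minus_commute)

lemma has_sum_sum:
  fixes f :: "'i \<Rightarrow> 'a \<Rightarrow> 'b::topological_comm_monoid_add"
  assumes "finite I" "\<And>i. i \<in> I \<Longrightarrow> (f i has_sum s i) A"
  shows "((\<lambda>x. \<Sum>i\<in>I. f i x) has_sum (\<Sum>i\<in>I. s i)) A"
  using assms by (induction I rule: finite_induct) (auto intro!: has_sum_add)

lemma has_sum_diff:
  fixes f g :: "'a \<Rightarrow> 'b::topological_ab_group_add"
  assumes "(f has_sum a) A" "(g has_sum b) A"
  shows "((\<lambda>x. f x - g x) has_sum (a - b)) A"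
  using has_sum_add[OF assms(1), of "\<lambda>x. - g x" "- b"] assms(2) by (simp add: has_sum_uminus)

lemma has_sum_if_eq: "((\<lambda>n. if n = m then c else 0) has_sum c) UNIV"
  by (rule has_sum_finite_neutralI[of "{m}"]) auto

lemma infsum_if_eq: "infsum (\<lambda>n. if n = m then c else 0) UNIV = c"
  by (rule infsumI[OF has_sum_if_eq])

lemma summable_on_small_tail:
  fixes g :: "'i \<Rightarrow> real"
  assumes g: "g summable_on UNIV" and e: "e > 0"
  obtains F where "finite F" "infsum g (UNIV - F) < e"
proof -
  have "eventually (\<lambda>F. dist (sum g F) (infsum g UNIV) < e) (finite_subsets_at_top UNIV)"
    using infsum_tendsto[OF g] e by (rule tendstoD)
  then obtain F where F: "finite F"
    and close: "\<And>Y. finite Y \<and> F \<subseteq> Y \<and> Y \<subseteq> UNIV \<Longrightarrow> dist (sum g Y) (infsum g UNIV) < e"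
    unfolding eventually_finite_subsets_at_top by blast
  have "infsum g (UNIV - F) = infsum g UNIV - sum g F"
    using infsum_Diff[OF g] F by simp
  also have "\<dots> < e" using close[of F] F by (simp add: dist_real_def)
  finally show ?thesis using F that by blast
qed

lemma norm_le_of_tendsto:
  fixes f :: "nat \<Rightarrow> 'a::real_normed_vector"
  assumes "f \<longlonglongrightarrow> L" "\<And>k. norm (f k) \<le> b"
  shows "norm L \<le> b"
  using tendsto_norm[OF assms(1)] by (rule LIMSEQ_le_const2) (use assms(2) in auto)

text \<open>Dominated convergence for unordered sums: split off a finite set carrying all but
  \<open>r/3\<close> of the majorant's mass.\<close>

lemma infsum_dominated_convergence:
  fixes f :: "nat \<Rightarrow> 'i \<Rightarrow> complex" and h :: "'i \<Rightarrow> complex" and g :: "'i \<Rightarrow> real"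
  assumes g: "g summable_on UNIV" and dom: "\<And>k i. cmod (f k i) \<le> g i"
    and lim: "\<And>i. (\<lambda>k. f k i) \<longlonglongrightarrow> h i"
  shows "(\<lambda>k. infsum (f k) UNIV) \<longlonglongrightarrow> infsum h UNIV"
proof (rule metric_LIMSEQ_I)
  fix r :: real assume r: "r > 0"
  have hdom: "cmod (h i) \<le> g i" for i by (rule norm_le_of_tendsto[OF lim dom])
  have tail: "cmod (infsum q (UNIV - F)) \<le> infsum g (UNIV - F)"
    and split: "infsum q UNIV = (\<Sum>i\<in>F. q i) + infsum q (UNIV - F)"
    if "\<And>i. cmod (q i) \<le> g i" "finite F" for q :: "'i \<Rightarrow> complex" and F
  proof -
    have norms: "(\<lambda>i. cmod (q i)) summable_on A" for A
      by (rule summable_on_subset_banach[of _ UNIV])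
         (auto intro!: summable_on_comparison_test[OF g] that(1))
    have "cmod (infsum q (UNIV - F)) \<le> infsum (\<lambda>i. cmod (q i)) (UNIV - F)"
      by (rule norm_infsum_bound) (use norms in simp)
    also have "\<dots> \<le> infsum g (UNIV - F)"
      by (rule infsum_mono) (use that norms summable_on_subset_banach[OF g] in auto)
    finally show "cmod (infsum q (UNIV - F)) \<le> infsum g (UNIV - F)" .
    show "infsum q UNIV = (\<Sum>i\<in>F. q i) + infsum q (UNIV - F)"
      using infsum_Diff[of q UNIV F] abs_summable_summable[OF norms] that(2) by simp
  qed
  obtain F where F: "finite F" "infsum g (UNIV - F) < r/3"
    using summable_on_small_tail[OF g, of "r/3"] r by auto
  have "(\<lambda>k. \<Sum>i\<in>F. f k i) \<longlonglongrightarrow> (\<Sum>i\<in>F. h i)"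
    by (intro tendsto_sum lim)
  then obtain k0 where k0: "\<And>k. k \<ge> k0 \<Longrightarrow> dist (\<Sum>i\<in>F. f k i) (\<Sum>i\<in>F. h i) < r/3"
    using r unfolding lim_sequentially by (metis divide_pos_pos zero_less_numeral)
  show "\<exists>k0. \<forall>k\<ge>k0. dist (infsum (f k) UNIV) (infsum h UNIV) < r"
  proof (intro exI allI impI)
    fix k assume k: "k \<ge> k0"
    have "dist (infsum (f k) UNIV) (infsum h UNIV) \<le>
        cmod ((\<Sum>i\<in>F. f k i) - (\<Sum>i\<in>F. h i)) + cmod (infsum (f k) (UNIV - F)) + cmod (infsum h (UNIV - F))"
      unfolding split[of "f k", OF dom F(1)] split[OF hdom F(1)] dist_norm
      by (smt (verit) norm_triangle_ineq norm_triangle_ineq4 add_diff_add)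
    also have "\<dots> < r/3 + r/3 + r/3"
      using k0[OF k] tail[of "f k", OF dom F(1)] tail[OF hdom F(1)] F(2) by (simp add: dist_norm)
    finally show "dist (infsum (f k) UNIV) (infsum h UNIV) < r" by simp
  qed
qed

lemma summable_on_swap_nonneg:
  fixes f :: "'i \<Rightarrow> 'j \<Rightarrow> real"
  assumes "\<And>i. f i summable_on UNIV" "(\<lambda>i. infsum (f i) UNIV) summable_on UNIV"
    and "\<And>i j. 0 \<le> f i j"
  shows "(\<lambda>(j, i). f i j) summable_on UNIV"
proof -
  have "(\<lambda>(i, j). f i j) summable_on (UNIV \<times> UNIV)"
    by (rule summable_on_SigmaI[where g = "\<lambda>i. infsum (f i) UNIV"]) (use assms in auto)
  hence "(\<lambda>(j, i). f i j) summable_on (UNIV \<times> UNIV)"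
    by (subst summable_on_swap) (simp add: case_prod_beta)
  thus ?thesis by simp
qed

lemma norm_mult_le_sum_squares: "cmod z * cmod w \<le> ((cmod z)\<^sup>2 + (cmod w)\<^sup>2) / 2"
  using sum_squares_bound[of "cmod z" "cmod w"] by simp

lemma l2_summable_norm_mult:
  assumes "l2 u" "l2 v"
  shows "(\<lambda>n. cmod (u n) * cmod (v n)) summable_on UNIV"
proof (rule summable_on_comparison_test)
  have "((\<lambda>n. (cmod (u n))\<^sup>2 + (cmod (v n))\<^sup>2) has_sum
      (infsum (\<lambda>n. (cmod (u n))\<^sup>2) UNIV + infsum (\<lambda>n. (cmod (v n))\<^sup>2) UNIV)) UNIV"
    using assms unfolding l2_def by (intro has_sum_add has_sum_infsum)
  thus "(\<lambda>n. ((cmod (u n))\<^sup>2 + (cmod (v n))\<^sup>2) / 2) summable_on UNIV"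
    by (rule has_sum_imp_summable[OF has_sum_divide_const])
  show "cmod (u n) * cmod (v n) \<le> ((cmod (u n))\<^sup>2 + (cmod (v n))\<^sup>2) / 2" for n
    by (rule norm_mult_le_sum_squares)
qed simp

lemma l2_inner_summable:
  assumes "l2 u" "l2 v"
  shows "(\<lambda>n. u n * cnj (v n)) summable_on UNIV"
  using l2_summable_norm_mult[OF assms] by (intro abs_summable_summable[of "\<lambda>n. u n * cnj (v n)"]) (simp add: norm_mult)

lemma infsum_norm_mult_le:
  assumes "l2 u" "l2 v"
  shows "infsum (\<lambda>n. cmod (u n) * cmod (v n)) UNIV \<le>
     (infsum (\<lambda>n. (cmod (u n))\<^sup>2) UNIV + infsum (\<lambda>n. (cmod (v n))\<^sup>2) UNIV) / 2"
proof (rule has_sum_mono[OF has_sum_infsum[OF l2_summable_norm_mult[OF assms]]])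
  show "((\<lambda>n. ((cmod (u n))\<^sup>2 + (cmod (v n))\<^sup>2) / 2) has_sum
      (infsum (\<lambda>n. (cmod (u n))\<^sup>2) UNIV + infsum (\<lambda>n. (cmod (v n))\<^sup>2) UNIV) / 2) UNIV"
    using assms unfolding l2_def by (intro has_sum_divide_const has_sum_add has_sum_infsum)
qed (rule norm_mult_le_sum_squares)

lemma l2_diff:
  assumes "l2 u" "l2 v"
  shows "l2 (\<lambda>n. u n - v n)"
  unfolding l2_def
proof (rule summable_on_comparison_test)
  show "(\<lambda>n. 2 * (cmod (u n))\<^sup>2 + 2 * (cmod (v n))\<^sup>2) summable_on UNIV"
    using assms unfolding l2_def by (intro summable_on_add summable_on_cmult_right)
  fix n
  have "(cmod (u n - v n))\<^sup>2 \<le> (cmod (u n) + cmod (v n))\<^sup>2"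
    by (intro power_mono norm_triangle_ineq4) auto
  also have "\<dots> \<le> 2 * (cmod (u n))\<^sup>2 + 2 * (cmod (v n))\<^sup>2"
    using sum_squares_bound[of "cmod (u n)" "cmod (v n)"] by (simp add: power2_sum)
  finally show "(cmod (u n - v n))\<^sup>2 \<le> 2 * (cmod (u n))\<^sup>2 + 2 * (cmod (v n))\<^sup>2" .
qed auto

lemma l2_inner_diff_left:
  assumes "l2 u" "l2 v" "l2 w"
  shows "l2_inner (\<lambda>n. u n - v n) w = l2_inner u w - l2_inner v w"
proof -
  have "((\<lambda>n. u n * cnj (w n) - v n * cnj (w n)) has_sum (l2_inner u w - l2_inner v w)) UNIV"
    unfolding l2_inner_def by (intro has_sum_diff has_sum_infsum l2_inner_summable assms)
  thus ?thesis unfolding l2_inner_def by (simp add: infsumI algebra_simps)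
qed

lemma l2_inner_commute_cnj: "l2_inner u v = cnj (l2_inner v u)"
  unfolding l2_inner_def infsum_cnj[symmetric] by (simp add: mult.commute)

lemma l2_inner_zero_left [simp]: "l2_inner (\<lambda>_. 0) u = 0"
  and l2_inner_zero_right [simp]: "l2_inner u (\<lambda>_. 0) = 0"
  by (simp_all add: l2_inner_def)

lemma mult_cnj_eq_norm_square: "z * cnj z = of_real ((cmod z)\<^sup>2)"
  by (simp add: complex_mult_cnj cmod_power2)

lemma l2_inner_self:
  assumes "l2 u"
  shows "l2_inner u u = of_real (infsum (\<lambda>n. (cmod (u n))\<^sup>2) UNIV)"
  unfolding l2_inner_def mult_cnj_eq_norm_square
  by (rule infsumI, rule has_sum_of_real_iff[THEN iffD2, OF has_sum_infsum])
     (use assms in \<open>simp add: l2_def\<close>)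

lemma norm_square_le_infsum:
  assumes "l2 u"
  shows "(cmod (u m))\<^sup>2 \<le> infsum (\<lambda>n. (cmod (u n))\<^sup>2) UNIV"
  using infsum_mono_neutral[of "\<lambda>n. (cmod (u n))\<^sup>2" "{m}" _ UNIV] assms by (simp add: l2_def)

definition delta :: "('d::finite \<Rightarrow> int) \<Rightarrow> ('d \<Rightarrow> int) \<Rightarrow> complex" where
  "delta m n = (if n = m then 1 else 0)"

lemma l2_delta: "l2 (delta m)"
proof -
  have "(\<lambda>n. (cmod (delta m n))\<^sup>2) = (\<lambda>n. if n = m then 1 else 0)"
    by (auto simp: delta_def)
  thus ?thesis unfolding l2_def using has_sum_if_eq[of m "1::real"] has_sum_imp_summable by metis
qed

lemma l2_inner_delta_left: "l2_inner (delta m) v = cnj (v m)"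
proof -
  have "(\<lambda>n. delta m n * cnj (v n)) = (\<lambda>n. if n = m then cnj (v m) else 0)"
    by (auto simp: delta_def)
  thus ?thesis unfolding l2_inner_def by (simp add: infsum_if_eq)
qed

section \<open>Orthonormal families and completeness\<close>

text \<open>Orthonormal families indexed by an arbitrary type, where some members may be \<open>0\<close>:
  this padding lets an eigenbasis be indexed by (centre, slot) pairs with a fixed number of
  slots per centre, and it is preserved under pointwise limits.\<close>

definition orthonormal_or_zero :: "('i \<Rightarrow> ('d::finite \<Rightarrow> int) \<Rightarrow> complex) \<Rightarrow> bool" where
  "orthonormal_or_zero \<psi> \<longleftrightarrow>
     (\<forall>i j. l2_inner (\<psi> i) (\<psi> j) = (if i = j \<and> \<psi> i \<noteq> (\<lambda>_. 0) then 1 else 0))"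

definition nonzero_members :: "('i \<Rightarrow> ('d::finite \<Rightarrow> int) \<Rightarrow> complex) \<Rightarrow> (('d \<Rightarrow> int) \<Rightarrow> complex) set" where
  "nonzero_members \<psi> = {\<psi> i | i. \<psi> i \<noteq> (\<lambda>_. 0)}"

text \<open>\<open>proj_kernel \<psi> m n\<close> is the matrix entry \<open>\<langle>\<delta>\<^sub>n, P \<delta>\<^sub>m\<rangle>\<close> of \<open>P = \<Sum>\<^sub>i |\<psi>\<^sub>i\<rangle>\<langle>\<psi>\<^sub>i|\<close>.
  Completeness is the statement \<open>P = 1\<close>; unlike completeness itself, this is a pointwise
  condition and survives limits by dominated convergence.\<close>

definition proj_kernel :: "('i \<Rightarrow> ('d::finite \<Rightarrow> int) \<Rightarrow> complex) \<Rightarrow> ('d \<Rightarrow> int) \<Rightarrow> ('d \<Rightarrow> int) \<Rightarrow> complex" where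
  "proj_kernel \<psi> m n = (\<Sum>\<^sub>\<infinity>i. cnj (\<psi> i m) * \<psi> i n)"

definition orthonormal_l1_family :: "('i \<Rightarrow> ('d::finite \<Rightarrow> int) \<Rightarrow> complex) \<Rightarrow> real \<Rightarrow> bool" where
  "orthonormal_l1_family \<psi> K \<longleftrightarrow> (\<forall>i. l2 (\<psi> i)) \<and> orthonormal_or_zero \<psi> \<and>
     (\<forall>m. (\<lambda>i. cmod (\<psi> i m)) summable_on UNIV) \<and>
     (\<forall>i. (\<lambda>n. cmod (\<psi> i n)) summable_on UNIV \<and> infsum (\<lambda>n. cmod (\<psi> i n)) UNIV \<le> K)"

lemma orthonormal_l1_family_l2: "orthonormal_l1_family \<psi> K \<Longrightarrow> l2 (\<psi> i)"
  unfolding orthonormal_l1_family_def by blast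

lemma orthonormal_or_zeroD:
  "orthonormal_or_zero \<psi> \<Longrightarrow> \<psi> i \<noteq> (\<lambda>_. 0) \<Longrightarrow> l2_inner (\<psi> i) (\<psi> j) = (if j = i then 1 else 0)"
  unfolding orthonormal_or_zero_def by auto

lemma orthonormal_or_zero_distinct:
  "orthonormal_or_zero \<psi> \<Longrightarrow> i \<noteq> j \<Longrightarrow> l2_inner (\<psi> i) (\<psi> j) = 0"
  unfolding orthonormal_or_zero_def by simp

lemma orthonormal_l1_family_norm_le_1:
  assumes "orthonormal_l1_family \<psi> K"
  shows "infsum (\<lambda>n. (cmod (\<psi> i n))\<^sup>2) UNIV \<le> 1"
proof -
  have "of_real (infsum (\<lambda>n. (cmod (\<psi> i n))\<^sup>2) UNIV) = l2_inner (\<psi> i) (\<psi> i)"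
    using assms by (simp add: l2_inner_self orthonormal_l1_family_def)
  also have "\<dots> = (if \<psi> i \<noteq> (\<lambda>_. 0) then 1 else 0)"
    using assms by (simp add: orthonormal_l1_family_def orthonormal_or_zero_def)
  finally show ?thesis by (auto split: if_splits)
qed

lemma orthonormal_l1_family_pointwise_le_1:
  assumes "orthonormal_l1_family \<psi> K"
  shows "cmod (\<psi> i n) \<le> 1"
proof -
  have "(cmod (\<psi> i n))\<^sup>2 \<le> 1"
    using norm_square_le_infsum[of "\<psi> i" n] orthonormal_l1_family_norm_le_1[OF assms, of i] assms
    by (auto simp: orthonormal_l1_family_def)
  thus ?thesis by (simp add: power_le_one_iff abs_le_square_iff)
qed

text \<open>Exchanging the sum over the family with the \<open>\<ell>\<^sup>2\<close> sum is legitimate because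
  \<open>\<Sum>\<^sub>i |\<psi>\<^sub>i m| \<Sum>\<^sub>n |u n| |\<psi>\<^sub>i n|\<close> converges: the inner sums are bounded by
  \<open>(\<parallel>u\<parallel>\<^sup>2 + 1) / 2\<close>.\<close>

lemma l2_inner_proj_kernel:
  fixes \<psi> :: "'i \<Rightarrow> ('d::finite \<Rightarrow> int) \<Rightarrow> complex"
  assumes fam: "orthonormal_l1_family \<psi> K" and u: "l2 u"
  shows "l2_inner u (proj_kernel \<psi> m) = (\<Sum>\<^sub>\<infinity>i. \<psi> i m * l2_inner u (\<psi> i))"
proof -
  define G where "G n i = u n * (\<psi> i m * cnj (\<psi> i n))" for n i
  define M where "M = (infsum (\<lambda>n. (cmod (u n))\<^sup>2) UNIV + 1) / 2"
  have l2i: "l2 (\<psi> i)" for i by (rule orthonormal_l1_family_l2[OF fam])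
  have inner_le: "infsum (\<lambda>n. cmod (u n) * cmod (\<psi> i n)) UNIV \<le> M" for i
    using infsum_norm_mult_le[OF u l2i, of i] orthonormal_l1_family_norm_le_1[OF fam, of i]
    unfolding M_def by (simp add: divide_right_mono)
  have "(\<lambda>(n, i). cmod (\<psi> i m) * (cmod (u n) * cmod (\<psi> i n))) summable_on UNIV"
  proof (rule summable_on_swap_nonneg)
    show "(\<lambda>n. cmod (\<psi> i m) * (cmod (u n) * cmod (\<psi> i n))) summable_on UNIV" for i
      by (intro summable_on_cmult_right l2_summable_norm_mult u l2i)
    show "(\<lambda>i. infsum (\<lambda>n. cmod (\<psi> i m) * (cmod (u n) * cmod (\<psi> i n))) UNIV) summable_on UNIV"
    proof (rule summable_on_comparison_test)
      show "(\<lambda>i. cmod (\<psi> i m) * M) summable_on UNIV"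
        using fam by (intro summable_on_cmult_left) (simp add: orthonormal_l1_family_def)
      show "infsum (\<lambda>n. cmod (\<psi> i m) * (cmod (u n) * cmod (\<psi> i n))) UNIV \<le> cmod (\<psi> i m) * M" for i
        using inner_le[of i] by (simp add: infsum_cmult_right' mult_left_mono)
      show "0 \<le> infsum (\<lambda>n. cmod (\<psi> i m) * (cmod (u n) * cmod (\<psi> i n))) UNIV" for i
        by (intro infsum_nonneg) auto
    qed
  qed auto
  hence abs: "(\<lambda>(n, i). G n i) summable_on (UNIV \<times> UNIV)"
    by (intro abs_summable_summable[of "\<lambda>(n, i). G n i"]) (simp add: G_def case_prod_unfold norm_mult mult_ac)
  have "l2_inner u (proj_kernel \<psi> m) = (\<Sum>\<^sub>\<infinity>n. \<Sum>\<^sub>\<infinity>i. G n i)"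
    unfolding l2_inner_def proj_kernel_def G_def infsum_cnj[symmetric]
    by (simp add: infsum_cmult_right')
  also have "\<dots> = (\<Sum>\<^sub>\<infinity>i. \<Sum>\<^sub>\<infinity>n. G n i)"
    by (rule infsum_swap_banach[OF abs])
  also have "\<dots> = (\<Sum>\<^sub>\<infinity>i. \<psi> i m * l2_inner u (\<psi> i))"
    unfolding l2_inner_def G_def infsum_cmult_right'[symmetric] by (simp add: mult_ac)
  finally show ?thesis .
qed

lemma l2_proj_kernel:
  fixes \<psi> :: "'i \<Rightarrow> ('d::finite \<Rightarrow> int) \<Rightarrow> complex"
  assumes fam: "orthonormal_l1_family \<psi> K"
  shows "l2 (proj_kernel \<psi> m)"
proof -
  define A where "A = infsum (\<lambda>i. cmod (\<psi> i m)) UNIV"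
  define Q where "Q n = infsum (\<lambda>i. cmod (\<psi> i m) * cmod (\<psi> i n)) UNIV" for n
  have at_m: "(\<lambda>i. cmod (\<psi> i m)) summable_on UNIV"
    and l1: "\<And>i. (\<lambda>n. cmod (\<psi> i n)) summable_on UNIV" "\<And>i. infsum (\<lambda>n. cmod (\<psi> i n)) UNIV \<le> K"
    using fam by (auto simp: orthonormal_l1_family_def)
  have le_1: "cmod (\<psi> i n) \<le> 1" for i n by (rule orthonormal_l1_family_pointwise_le_1[OF fam])
  have terms: "(\<lambda>i. cmod (\<psi> i m) * cmod (\<psi> i n)) summable_on UNIV" for n
    by (rule summable_on_comparison_test[OF at_m]) (auto simp: le_1 mult_left_le)
  have "(\<lambda>(n, i). cmod (\<psi> i m) * cmod (\<psi> i n)) summable_on UNIV"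
  proof (rule summable_on_swap_nonneg)
    show "(\<lambda>i. infsum (\<lambda>n. cmod (\<psi> i m) * cmod (\<psi> i n)) UNIV) summable_on UNIV"
    proof (rule summable_on_comparison_test)
      show "(\<lambda>i. cmod (\<psi> i m) * K) summable_on UNIV" by (intro summable_on_cmult_left at_m)
      show "infsum (\<lambda>n. cmod (\<psi> i m) * cmod (\<psi> i n)) UNIV \<le> cmod (\<psi> i m) * K" for i
        using l1(2)[of i] by (simp add: infsum_cmult_right' mult_left_mono)
    qed (auto intro: infsum_nonneg)
  qed (auto intro: summable_on_cmult_right l1(1))
  hence Q: "Q summable_on UNIV"
    unfolding Q_def using summable_on_Sigma_banach[of "\<lambda>n i. cmod (\<psi> i m) * cmod (\<psi> i n)" UNIV "\<lambda>_. UNIV"]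
    by simp
  show ?thesis unfolding l2_def
  proof (rule summable_on_comparison_test)
    show "(\<lambda>n. A * Q n) summable_on UNIV" by (intro summable_on_cmult_right Q)
    fix n
    have kernel_le: "cmod (proj_kernel \<psi> m n) \<le> Q n"
      unfolding proj_kernel_def Q_def
      using norm_infsum_bound[of "\<lambda>i. cnj (\<psi> i m) * \<psi> i n" UNIV] terms[of n] by (simp add: norm_mult)
    have "Q n \<le> A"
      unfolding Q_def A_def by (rule infsum_mono[OF terms at_m]) (simp add: le_1 mult_left_le)
    moreover have "0 \<le> Q n" unfolding Q_def by (intro infsum_nonneg) auto
    ultimately show "(cmod (proj_kernel \<psi> m n))\<^sup>2 \<le> A * Q n"
      using kernel_le by (simp add: power2_eq_square mult_mono')
  qed auto
qed

lemma proj_kernel_eq_delta_if_complete: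
  fixes \<psi> :: "'i \<Rightarrow> ('d::finite \<Rightarrow> int) \<Rightarrow> complex"
  assumes fam: "orthonormal_l1_family \<psi> K" and complete: "complete_orthonormal (nonzero_members \<psi>)"
  shows "proj_kernel \<psi> m = delta m"
proof -
  define v where "v n = delta m n - proj_kernel \<psi> m n" for n
  have l2i: "l2 (\<psi> i)" for i by (rule orthonormal_l1_family_l2[OF fam])
  have l2v: "l2 v" unfolding v_def by (intro l2_diff l2_delta l2_proj_kernel[OF fam])
  have "l2_inner v u = 0" if "u \<in> nonzero_members \<psi>" for u
  proof -
    from that obtain i where i: "u = \<psi> i" "\<psi> i \<noteq> (\<lambda>_. 0)" by (auto simp: nonzero_members_def)
    have orth: "orthonormal_or_zero \<psi>" using fam by (simp add: orthonormal_l1_family_def)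
    have "l2_inner (\<psi> i) (proj_kernel \<psi> m) = (\<Sum>\<^sub>\<infinity>j. \<psi> j m * l2_inner (\<psi> i) (\<psi> j))"
      by (rule l2_inner_proj_kernel[OF fam l2i])
    also have "\<dots> = (\<Sum>\<^sub>\<infinity>j. if j = i then \<psi> i m else 0)"
      by (rule infsum_cong) (simp add: orthonormal_or_zeroD[OF orth i(2)])
    finally have "l2_inner (proj_kernel \<psi> m) (\<psi> i) = cnj (\<psi> i m)"
      by (subst l2_inner_commute_cnj) (simp add: infsum_if_eq)
    thus ?thesis unfolding v_def i(1)
      by (simp add: l2_inner_diff_left l2_delta l2_proj_kernel[OF fam] l2i l2_inner_delta_left)
  qed
  with complete l2v have "v = (\<lambda>_. 0)" unfolding complete_orthonormal_def by blast
  thus ?thesis unfolding v_def by (auto simp: fun_eq_iff dest: fun_cong)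
qed

lemma complete_if_proj_kernel_eq_delta:
  fixes \<psi> :: "'i \<Rightarrow> ('d::finite \<Rightarrow> int) \<Rightarrow> complex"
  assumes fam: "orthonormal_l1_family \<psi> K" and kernel: "\<And>m. proj_kernel \<psi> m = delta m"
  shows "complete_orthonormal (nonzero_members \<psi>)"
  unfolding complete_orthonormal_def
proof (intro conjI ballI allI impI)
  have orth: "orthonormal_or_zero \<psi>" using fam by (simp add: orthonormal_l1_family_def)
  show "l2 u" if "u \<in> nonzero_members \<psi>" for u
    using that fam by (auto simp: orthonormal_l1_family_def nonzero_members_def)
  show "l2_inner u v = (if u = v then 1 else 0)"
    if uv: "u \<in> nonzero_members \<psi>" "v \<in> nonzero_members \<psi>" for u v
  proof -
    obtain i j where ij: "u = \<psi> i" "\<psi> i \<noteq> (\<lambda>_. 0)" "v = \<psi> j"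
      using uv by (auto simp: nonzero_members_def)
    have "\<psi> i \<noteq> \<psi> j" if "i \<noteq> j"
      using orthonormal_or_zeroD[OF orth ij(2), of i] orthonormal_or_zeroD[OF orth ij(2), of j] that
      by auto
    thus ?thesis using orthonormal_or_zeroD[OF orth ij(2), of j] ij by auto
  qed
  fix v assume "l2 v \<and> (\<forall>u\<in>nonzero_members \<psi>. l2_inner v u = 0)"
  hence l2v: "l2 v" and perp: "\<And>i. l2_inner v (\<psi> i) = 0"
    by (auto simp: nonzero_members_def) (metis l2_inner_zero_right)
  show "v = (\<lambda>_. 0)"
  proof
    fix m
    have "v m = l2_inner v (delta m)"
      by (simp add: l2_inner_commute_cnj[of v] l2_inner_delta_left)
    also have "\<dots> = (\<Sum>\<^sub>\<infinity>i. \<psi> i m * l2_inner v (\<psi> i))"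
      unfolding kernel[symmetric] by (rule l2_inner_proj_kernel[OF fam l2v])
    finally show "v m = 0" by (simp add: perp)
  qed
qed

section \<open>Eigenfunctions localised at centres\<close>

definition decaying_family ::
    "real \<Rightarrow> real \<Rightarrow> nat \<Rightarrow> (('d::finite \<Rightarrow> int) \<times> nat \<Rightarrow> ('d \<Rightarrow> int) \<Rightarrow> complex) \<Rightarrow> bool" where
  "decaying_family a C N \<psi> \<longleftrightarrow>
     (\<forall>z j n. cmod (\<psi> (z, j) n) \<le> C * decay a (n - z)) \<and> (\<forall>z j. N \<le> j \<longrightarrow> \<psi> (z, j) = (\<lambda>_. 0))"

definition slot_majorant :: "real \<Rightarrow> real \<Rightarrow> nat \<Rightarrow> ('d::finite \<Rightarrow> int) \<Rightarrow> ('d \<Rightarrow> int) \<times> nat \<Rightarrow> real" where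
  "slot_majorant a C N m l = (if snd l < N then C * decay a (m - fst l) else 0)"

lemma decaying_familyD:
  assumes "decaying_family a C N \<psi>"
  shows "cmod (\<psi> l n) \<le> C * decay a (n - fst l)"
  using assms prod.collapse[of l] unfolding decaying_family_def by metis

lemma decaying_family_le_slot_majorant:
  assumes "decaying_family a C N \<psi>"
  shows "cmod (\<psi> l m) \<le> slot_majorant a C N m l"
  using assms prod.collapse[of l] unfolding decaying_family_def slot_majorant_def by (cases l) auto

lemma decaying_family_le_const:
  assumes "decaying_family a C N \<psi>" "0 \<le> a"
  shows "cmod (\<psi> l n) \<le> C"
proof -
  have bound: "cmod (\<psi> l n) \<le> C * decay a (n - fst l)" by (rule decaying_familyD[OF assms(1)])
  hence "0 \<le> C * decay a (n - fst l)" by (rule order_trans[OF norm_ge_zero])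
  hence "0 \<le> C" using decay_pos[of a "n - fst l"] by (simp add: zero_le_mult_iff)
  thus ?thesis using bound decay_le_1[OF assms(2), of "n - fst l"] by (meson mult_left_le order_trans)
qed

lemma summable_on_slot_majorant:
  assumes a: "0 < a" and C: "0 \<le> C"
  shows "slot_majorant a C N m summable_on UNIV"
proof -
  have "slot_majorant a C N m summable_on (UNIV \<times> UNIV)"
  proof (rule summable_on_SigmaI[where g = "\<lambda>z. of_nat N * (C * decay a (m - z))"])
    show "((\<lambda>j. slot_majorant a C N m (z, j)) has_sum of_nat N * (C * decay a (m - z))) UNIV" for z
      by (rule has_sum_finite_neutralI[of "{..<N}"]) (auto simp: slot_majorant_def)
    show "(\<lambda>z. of_nat N * (C * decay a (m - z))) summable_on UNIV"
      by (intro summable_on_cmult_right summable_on_decay_diff' a)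
  qed (use C in \<open>auto simp: slot_majorant_def decay_pos less_imp_le\<close>)
  thus ?thesis by simp
qed

lemma decaying_family_orthonormal_l1:
  fixes \<psi> :: "('d::finite \<Rightarrow> int) \<times> nat \<Rightarrow> ('d \<Rightarrow> int) \<Rightarrow> complex"
  assumes dec: "decaying_family a C N \<psi>" and a: "0 < a" and C: "0 \<le> C"
    and orth: "orthonormal_or_zero \<psi>"
  shows "orthonormal_l1_family \<psi> (C * infsum (decay a) (UNIV :: ('d \<Rightarrow> int) set))"
  unfolding orthonormal_l1_family_def
proof (intro conjI allI orth)
  show "(\<lambda>l. cmod (\<psi> l m)) summable_on UNIV" for m
    by (rule summable_on_comparison_test[OF summable_on_slot_majorant[OF a C, of N m]])
       (auto intro: decaying_family_le_slot_majorant[OF dec])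
  fix l :: "('d \<Rightarrow> int) \<times> nat"
  have bound: "cmod (\<psi> l n) \<le> C * decay a (n - fst l)" for n by (rule decaying_familyD[OF dec])
  have maj: "(\<lambda>n. C * decay a (n - fst l)) summable_on UNIV"
    by (intro summable_on_cmult_right summable_on_decay_diff a)
  show l1: "(\<lambda>n. cmod (\<psi> l n)) summable_on UNIV"
    by (rule summable_on_comparison_test[OF maj]) (use bound in auto)
  have "infsum (\<lambda>n. cmod (\<psi> l n)) UNIV \<le> infsum (\<lambda>n. C * decay a (n - fst l)) UNIV"
    by (rule infsum_mono[OF l1 maj bound])
  also have "\<dots> = C * infsum (decay a) (UNIV :: ('d \<Rightarrow> int) set)"
    by (simp add: infsum_cmult_right' infsum_translate)
  finally show "infsum (\<lambda>n. cmod (\<psi> l n)) UNIV \<le> C * infsum (decay a) (UNIV :: ('d \<Rightarrow> int) set)" .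
  show "l2 (\<psi> l)" unfolding l2_def
  proof (rule summable_on_comparison_test)
    show "(\<lambda>n. C * (C * decay a (n - fst l))) summable_on UNIV" by (intro summable_on_cmult_right maj)
    show "(cmod (\<psi> l n))\<^sup>2 \<le> C * (C * decay a (n - fst l))" for n
      unfolding power2_eq_square
      by (intro mult_mono bound decaying_family_le_const[OF dec]) (use a C in auto)
  qed auto
qed

lemma bessel_inequality_point:
  fixes B :: "(('d::finite \<Rightarrow> int) \<Rightarrow> complex) set"
  assumes l2B: "\<And>u. u \<in> B \<Longrightarrow> l2 u"
    and onB: "\<And>u v. u \<in> B \<Longrightarrow> v \<in> B \<Longrightarrow> l2_inner u v = (if u = v then 1 else 0)"
    and F: "finite F" "F \<subseteq> B"
  shows "(\<Sum>\<phi>\<in>F. (cmod (\<phi> m))\<^sup>2) \<le> 1"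
proof -
  define S where "S = (\<Sum>\<phi>\<in>F. (cmod (\<phi> m))\<^sup>2)"
  define w where "w n = (\<Sum>\<phi>\<in>F. cnj (\<phi> m) * \<phi> n)" for n
  have w_sq: "w n * cnj (w n) = (\<Sum>\<phi>\<in>F. \<Sum>\<psi>\<in>F. cnj (\<phi> m) * \<psi> m * (\<phi> n * cnj (\<psi> n)))" for n
    unfolding w_def by (simp add: cnj_sum sum_product mult_ac) (subst sum.swap, simp add: mult_ac)
  have diag: "(\<Sum>\<psi>\<in>F. cnj (\<phi> m) * \<psi> m * l2_inner \<phi> \<psi>) = cnj (\<phi> m) * \<phi> m" if "\<phi> \<in> F" for \<phi>
  proof -
    have "(\<Sum>\<psi>\<in>F. cnj (\<phi> m) * \<psi> m * l2_inner \<phi> \<psi>) = (\<Sum>\<psi>\<in>F. if \<psi> = \<phi> then cnj (\<phi> m) * \<phi> m else 0)"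
      using F that by (intro sum.cong refl) (auto simp: onB[OF subsetD[OF F(2)] subsetD[OF F(2)]])
    thus ?thesis using F that by (simp add: sum.delta)
  qed
  have "((\<lambda>n. w n * cnj (w n)) has_sum (\<Sum>\<phi>\<in>F. \<Sum>\<psi>\<in>F. cnj (\<phi> m) * \<psi> m * l2_inner \<phi> \<psi>)) UNIV"
    unfolding w_sq l2_inner_def
    by (intro has_sum_sum F has_sum_cmult_right has_sum_infsum l2_inner_summable l2B) (use F in auto)
  also have "(\<Sum>\<phi>\<in>F. \<Sum>\<psi>\<in>F. cnj (\<phi> m) * \<psi> m * l2_inner \<phi> \<psi>) = of_real S"
    unfolding S_def using diag by (simp add: mult.commute mult_cnj_eq_norm_square)
  finally have "((\<lambda>n. complex_of_real ((cmod (w n))\<^sup>2)) has_sum of_real S) UNIV"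
    by (simp only: mult_cnj_eq_norm_square)
  hence "((\<lambda>n. (cmod (w n))\<^sup>2) has_sum S) UNIV"
    by (simp only: has_sum_of_real_iff)
  hence "(cmod (w m))\<^sup>2 \<le> S"
    using norm_square_le_infsum[of w m] by (simp add: l2_def has_sum_imp_summable infsumI)
  moreover have "w m = of_real S" unfolding w_def S_def by (simp add: mult.commute mult_cnj_eq_norm_square)
  ultimately have "S * S \<le> S * 1" by (simp add: power2_eq_square)
  moreover have "0 \<le> S" unfolding S_def by (intro sum_nonneg) auto
  ultimately show ?thesis unfolding S_def[symmetric]
    by (cases "S = 0") (auto simp: mult_le_cancel_left_pos)
qed

lemma decaying_unit_vector_mass:
  fixes \<phi> :: "('d::finite \<Rightarrow> int) \<Rightarrow> complex"
  assumes l2: "l2 \<phi>" and unit: "l2_inner \<phi> \<phi> = 1"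
    and dec: "\<And>n. cmod (\<phi> n) \<le> C * decay a (n - z)"
    and tail: "infsum (\<lambda>n. C\<^sup>2 * decay (2 * a) n) (UNIV - F) < 1/2"
    and a: "0 < a" and F: "finite F"
  shows "1/2 \<le> (\<Sum>n\<in>(\<lambda>n. n + z) ` F. (cmod (\<phi> n))\<^sup>2)"
proof -
  define D where "D = (\<lambda>n. n + z) ` F"
  define G where "G n = C\<^sup>2 * decay (2 * a) n" for n :: "'d \<Rightarrow> int"
  have sq: "(\<lambda>n. (cmod (\<phi> n))\<^sup>2) summable_on A" for A
    using l2 unfolding l2_def by (rule summable_on_subset_banach) simp
  have "of_real (infsum (\<lambda>n. (cmod (\<phi> n))\<^sup>2) UNIV) = (1 :: complex)"
    using unit by (simp add: l2_inner_self[OF l2])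
  hence "infsum (\<lambda>n. (cmod (\<phi> n))\<^sup>2) (UNIV - D) = 1 - (\<Sum>n\<in>D. (cmod (\<phi> n))\<^sup>2)"
    using infsum_Diff[OF sq sq, of D] F unfolding D_def by (simp add: of_real_eq_1_iff)
  moreover have "infsum (\<lambda>n. (cmod (\<phi> n))\<^sup>2) (UNIV - D) \<le> infsum (\<lambda>n. G (n - z)) (UNIV - D)"
  proof (rule infsum_mono[OF sq])
    have "(\<lambda>n. G (n - z)) summable_on UNIV"
      unfolding G_def using a by (simp add: summable_on_cmult_right summable_on_decay_diff)
    thus "(\<lambda>n. G (n - z)) summable_on UNIV - D" by (rule summable_on_subset_banach) auto
    show "(cmod (\<phi> n))\<^sup>2 \<le> G (n - z)" for n
      unfolding G_def by (rule square_le_decay_square[OF norm_ge_zero dec])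
  qed
  moreover have "infsum (\<lambda>n. G (n - z)) (UNIV - D) = infsum G (UNIV - F)"
  proof (rule infsum_reindex_bij_betw)
    have "bij_betw (\<lambda>n. n - z) D F"
      by (rule bij_betw_subset[OF bij_betw_translate_diff subset_UNIV]) (simp add: D_def image_image)
    thus "bij_betw (\<lambda>n. n - z) (UNIV - D) (UNIV - F)"
      by (rule bij_betw_DiffI[OF bij_betw_translate_diff]) auto
  qed
  ultimately show ?thesis using tail unfolding D_def G_def by linarith
qed

text \<open>Each centre carries at most \<open>2 |F|\<close> eigenfunctions: by the previous lemma each of them
  has mass \<open>\<ge> 1/2\<close> on the window \<open>z + F\<close>, while by Bessel's inequality the total mass of
  an orthonormal set at each lattice point is \<open>\<le> 1\<close>.\<close>

lemma uniformly_localized_fibres_bounded: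
  fixes B :: "(('d::finite \<Rightarrow> int) \<Rightarrow> complex) set" and c :: "(('d \<Rightarrow> int) \<Rightarrow> complex) \<Rightarrow> ('d \<Rightarrow> int)"
  assumes l2B: "\<And>u. u \<in> B \<Longrightarrow> l2 u"
    and onB: "\<And>u v. u \<in> B \<Longrightarrow> v \<in> B \<Longrightarrow> l2_inner u v = (if u = v then 1 else 0)"
    and a: "0 < a"
    and dec: "\<And>\<phi> m. \<phi> \<in> B \<Longrightarrow> cmod (\<phi> m) \<le> C * decay a (m - c \<phi>)"
  obtains N where "\<And>z. finite {\<phi>\<in>B. c \<phi> = z}" "\<And>z. card {\<phi>\<in>B. c \<phi> = z} \<le> N"
proof -
  have "(\<lambda>n::'d \<Rightarrow> int. C\<^sup>2 * decay (2 * a) n) summable_on UNIV"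
    using a by (intro summable_on_cmult_right summable_on_decay) auto
  then obtain F0 :: "('d \<Rightarrow> int) set"
    where F0: "finite F0" "infsum (\<lambda>n. C\<^sup>2 * decay (2 * a) n) (UNIV - F0) < 1/2"
    by (rule summable_on_small_tail[of _ "1/2"]) auto
  have card_le: "card F \<le> 2 * card F0" if F: "finite F" "F \<subseteq> {\<phi>\<in>B. c \<phi> = z}" for F z
  proof -
    define D where "D = (\<lambda>n. n + z) ` F0"
    have "real (card F) / 2 = (\<Sum>\<phi>\<in>F. 1/2)" by simp
    also have "\<dots> \<le> (\<Sum>\<phi>\<in>F. \<Sum>n\<in>D. (cmod (\<phi> n))\<^sup>2)"
    proof (rule sum_mono)
      fix \<phi> assume "\<phi> \<in> F"
      hence \<phi>: "\<phi> \<in> B" "c \<phi> = z" using F by auto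
      show "1/2 \<le> (\<Sum>n\<in>D. (cmod (\<phi> n))\<^sup>2)"
        unfolding D_def
        by (rule decaying_unit_vector_mass[OF l2B[OF \<phi>(1)] _ _ F0(2) a F0(1)])
           (use onB[OF \<phi>(1) \<phi>(1)] dec[OF \<phi>(1)] \<phi>(2) in auto)
    qed
    also have "\<dots> = (\<Sum>n\<in>D. \<Sum>\<phi>\<in>F. (cmod (\<phi> n))\<^sup>2)" by (rule sum.swap)
    also have "\<dots> \<le> (\<Sum>n\<in>D. 1)"
      by (intro sum_mono bessel_inequality_point[OF l2B onB F(1)]) (use F in auto)
    also have "\<dots> \<le> real (card F0)" unfolding D_def by (simp add: card_image_le F0(1))
    finally show ?thesis by simp
  qed
  have fin: "finite {\<phi>\<in>B. c \<phi> = z}" for z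
  proof (rule ccontr)
    assume "infinite {\<phi>\<in>B. c \<phi> = z}"
    then obtain F where "F \<subseteq> {\<phi>\<in>B. c \<phi> = z}" "finite F" "card F = Suc (2 * card F0)"
      using infinite_arbitrarily_large by blast
    thus False using card_le by fastforce
  qed
  show ?thesis by (rule that[OF fin card_le[OF fin order_refl]])
qed

lemma centre_slot_labelling:
  fixes B :: "(('d::finite \<Rightarrow> int) \<Rightarrow> complex) set" and c :: "(('d \<Rightarrow> int) \<Rightarrow> complex) \<Rightarrow> ('d \<Rightarrow> int)"
  assumes fin: "\<And>z. finite {\<phi>\<in>B. c \<phi> = z}" and card: "\<And>z. card {\<phi>\<in>B. c \<phi> = z} \<le> N"
    and nz: "(\<lambda>_. 0) \<notin> B"
  obtains \<Phi> :: "('d \<Rightarrow> int) \<times> nat \<Rightarrow> ('d \<Rightarrow> int) \<Rightarrow> complex" where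
    "\<And>z j. N \<le> j \<Longrightarrow> \<Phi> (z, j) = (\<lambda>_. 0)"
    "\<And>z j. \<Phi> (z, j) \<noteq> (\<lambda>_. 0) \<Longrightarrow> \<Phi> (z, j) \<in> B \<and> c (\<Phi> (z, j)) = z"
    "nonzero_members \<Phi> = B"
    "\<And>l l'. \<Phi> l = \<Phi> l' \<Longrightarrow> \<Phi> l \<noteq> (\<lambda>_. 0) \<Longrightarrow> l = l'"
proof -
  define L where "L z = (SOME xs. set xs = {\<phi>\<in>B. c \<phi> = z} \<and> distinct xs)" for z
  have L: "set (L z) = {\<phi>\<in>B. c \<phi> = z}" "distinct (L z)" for z
    unfolding L_def by (metis (mono_tags, lifting) someI_ex fin finite_distinct_list)+
  have len: "length (L z) \<le> N" for z using L[of z] card[of z] distinct_card by metis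
  define \<Phi> where "\<Phi> = (\<lambda>(z, j). if j < length (L z) then L z ! j else (\<lambda>_. 0))"
  have slot: "\<Phi> (z, j) \<noteq> (\<lambda>_. 0) \<Longrightarrow> j < length (L z) \<and> \<Phi> (z, j) = L z ! j" for z j
    unfolding \<Phi>_def by (auto split: if_splits)
  have member: "\<Phi> (z, j) \<in> B \<and> c (\<Phi> (z, j)) = z" if "\<Phi> (z, j) \<noteq> (\<lambda>_. 0)" for z j
    using slot[OF that] nth_mem[of j "L z"] L(1)[of z] by auto
  show ?thesis
  proof (rule that)
    show "\<Phi> (z, j) = (\<lambda>_. 0)" if "N \<le> j" for z j
      using len[of z] that unfolding \<Phi>_def by auto
    show "\<Phi> (z, j) \<noteq> (\<lambda>_. 0) \<Longrightarrow> \<Phi> (z, j) \<in> B \<and> c (\<Phi> (z, j)) = z" for z j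
      by (rule member)
    show "nonzero_members \<Phi> = B"
    proof
      show "nonzero_members \<Phi> \<subseteq> B"
        unfolding nonzero_members_def using member by force
      show "B \<subseteq> nonzero_members \<Phi>"
      proof
        fix \<phi> assume \<phi>: "\<phi> \<in> B"
        hence "\<phi> \<in> set (L (c \<phi>))" using L(1)[of "c \<phi>"] by simp
        then obtain j where j: "j < length (L (c \<phi>))" "L (c \<phi>) ! j = \<phi>"
          by (auto simp: in_set_conv_nth)
        hence "\<Phi> (c \<phi>, j) = \<phi>" unfolding \<Phi>_def by simp
        moreover have "\<phi> \<noteq> (\<lambda>_. 0)" using \<phi> nz by auto
        ultimately show "\<phi> \<in> nonzero_members \<Phi>"
          unfolding nonzero_members_def by (intro CollectI exI[of _ "(c \<phi>, j)"]) simp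
      qed
    qed
    show "l = l'" if eq: "\<Phi> l = \<Phi> l'" and nz: "\<Phi> l \<noteq> (\<lambda>_. 0)" for l l'
    proof -
      obtain z j z' j' where l: "l = (z, j)" "l' = (z', j')" by (cases l, cases l')
      have "z = z'" using member[of z j] member[of z' j'] eq nz unfolding l by auto
      moreover have "j = j'"
        using slot[of z j] slot[of z' j'] eq nz L(2)[of z] \<open>z = z'\<close>
        unfolding l by (auto simp: nth_eq_iff_index_eq)
      ultimately show ?thesis using l by simp
    qed
  qed
qed

definition schrodinger :: "(('d::finite \<Rightarrow> int) \<Rightarrow> real) \<Rightarrow> (('d \<Rightarrow> int) \<Rightarrow> complex) \<Rightarrow> ('d \<Rightarrow> int) \<Rightarrow> complex" where
  "schrodinger V u n = (\<Sum>m\<in>{m. znorm (m - n) = 1}. u m) + complex_of_real (V n) * u n"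

lemma schr_op_eq_schrodinger: "schr_op f T \<omega> = schrodinger (\<lambda>n. f (Tpow T n \<omega>))"
  by (intro ext) (simp add: schr_op_def schrodinger_def)

lemma schrodinger_translate: "schrodinger (\<lambda>n. V (n + s)) (\<lambda>n. u (n + s)) n = schrodinger V u (n + s)"
proof -
  have "bij_betw (\<lambda>m. m + s) {m. znorm (m - n) = 1} {m. znorm (m - (n + s)) = 1}"
    by (rule bij_betwI[of _ _ _ "\<lambda>m. m - s"]) (auto simp: algebra_simps)
  hence "(\<Sum>m\<in>{m. znorm (m - n) = 1}. u (m + s)) = (\<Sum>m\<in>{m. znorm (m - (n + s)) = 1}. u m)"
    by (rule sum.reindex_bij_betw)
  thus ?thesis unfolding schrodinger_def by simp
qed

lemma tendsto_schrodinger: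
  fixes V :: "nat \<Rightarrow> ('d::finite \<Rightarrow> int) \<Rightarrow> real"
  assumes "\<And>n. (\<lambda>k. V k n) \<longlonglongrightarrow> V' n" "\<And>n. (\<lambda>k. u k n) \<longlonglongrightarrow> u' n"
  shows "(\<lambda>k. schrodinger (V k) (u k) n) \<longlonglongrightarrow> schrodinger V' u' n"
  unfolding schrodinger_def using assms by (intro tendsto_intros) auto

text \<open>Completeness is expressed through \<open>proj_kernel\<close>, so that, unlike the ULE property itself,
  every clause is stable under translation and under pointwise limits.\<close>

definition localized_eigenbasis :: "real \<Rightarrow> real \<Rightarrow> nat \<Rightarrow> (('d::finite \<Rightarrow> int) \<Rightarrow> real) \<Rightarrow>
    (('d \<Rightarrow> int) \<times> nat \<Rightarrow> ('d \<Rightarrow> int) \<Rightarrow> complex) \<Rightarrow> bool" where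
  "localized_eigenbasis a C N V \<psi> \<longleftrightarrow> decaying_family a C N \<psi> \<and> orthonormal_or_zero \<psi> \<and>
     (\<forall>m. proj_kernel \<psi> m = delta m) \<and>
     (\<forall>l. \<psi> l \<noteq> (\<lambda>_. 0) \<longrightarrow> (\<exists>E. \<forall>n. schrodinger V (\<psi> l) n = E * \<psi> l n))"

lemma localized_eigenbasis_if_ULE:
  fixes V :: "('d::finite \<Rightarrow> int) \<Rightarrow> real"
  assumes a: "0 < a" and C: "0 < C" and ule: "ULE_with a C (schrodinger V)"
  obtains N \<Phi> where "localized_eigenbasis a C N V \<Phi>"
proof -
  obtain B c where complete: "complete_orthonormal B" and eig: "\<forall>\<phi>\<in>B. is_eigenfunction (schrodinger V) \<phi>"
    and dec: "\<And>\<phi> m. \<phi> \<in> B \<Longrightarrow> cmod (\<phi> m) \<le> C * decay a (m - c \<phi>)"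
    using ule unfolding ULE_with_def decay_def by blast
  have l2B: "\<And>u. u \<in> B \<Longrightarrow> l2 u"
    and onB: "\<And>u v. u \<in> B \<Longrightarrow> v \<in> B \<Longrightarrow> l2_inner u v = (if u = v then 1 else 0)"
    using complete unfolding complete_orthonormal_def by auto
  obtain N where fin: "\<And>z. finite {\<phi>\<in>B. c \<phi> = z}" and card: "\<And>z. card {\<phi>\<in>B. c \<phi> = z} \<le> N"
    using uniformly_localized_fibres_bounded[OF l2B onB a dec] by blast
  have "(\<lambda>_. 0) \<notin> B" using eig by (auto simp: is_eigenfunction_def)
  then obtain \<Phi> :: "('d \<Rightarrow> int) \<times> nat \<Rightarrow> ('d \<Rightarrow> int) \<Rightarrow> complex" where unused: "\<And>z j. N \<le> j \<Longrightarrow> \<Phi> (z, j) = (\<lambda>_. 0)"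
    and member: "\<And>z j. \<Phi> (z, j) \<noteq> (\<lambda>_. 0) \<Longrightarrow> \<Phi> (z, j) \<in> B \<and> c (\<Phi> (z, j)) = z"
    and members: "nonzero_members \<Phi> = B"
    and inj: "\<And>l l'. \<Phi> l = \<Phi> l' \<Longrightarrow> \<Phi> l \<noteq> (\<lambda>_. 0) \<Longrightarrow> l = l'"
    using centre_slot_labelling[OF fin card] by blast
  have inB: "\<Phi> l \<in> B" if "\<Phi> l \<noteq> (\<lambda>_. 0)" for l
    using member[of "fst l" "snd l"] that by simp
  have decaying: "decaying_family a C N \<Phi>"
    unfolding decaying_family_def
  proof (intro conjI allI impI unused)
    show "cmod (\<Phi> (z, j) n) \<le> C * decay a (n - z)" for z j n
      using member[of z j] dec[of "\<Phi> (z, j)" n] C decay_pos[of a "n - z"]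
      by (cases "\<Phi> (z, j) = (\<lambda>_. 0)") auto
  qed
  have orth: "orthonormal_or_zero \<Phi>"
    unfolding orthonormal_or_zero_def
  proof (intro allI)
    show "l2_inner (\<Phi> l) (\<Phi> l') = (if l = l' \<and> \<Phi> l \<noteq> (\<lambda>_. 0) then 1 else 0)" for l l'
      using onB[OF inB inB, of l l'] inj[of l l']
      by (cases "\<Phi> l = (\<lambda>_. 0)"; cases "\<Phi> l' = (\<lambda>_. 0)") auto
  qed
  have fam: "orthonormal_l1_family \<Phi> (C * infsum (decay a) (UNIV :: ('d \<Rightarrow> int) set))"
    by (rule decaying_family_orthonormal_l1[OF decaying a _ orth]) (use C in simp)
  have "proj_kernel \<Phi> m = delta m" for m
    by (rule proj_kernel_eq_delta_if_complete[OF fam]) (use complete members in simp)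
  moreover have "\<exists>E. \<forall>n. schrodinger V (\<Phi> l) n = E * \<Phi> l n" if "\<Phi> l \<noteq> (\<lambda>_. 0)" for l
    using eig inB[OF that] by (auto simp: is_eigenfunction_def)
  ultimately show ?thesis using that decaying orth unfolding localized_eigenbasis_def by blast
qed

lemma ULE_if_localized_eigenbasis:
  fixes V :: "('d::finite \<Rightarrow> int) \<Rightarrow> real"
  assumes a: "0 < a" and C: "0 \<le> C" and loc: "localized_eigenbasis a C N V \<phi>"
  shows "ULE_with a C (schrodinger V)"
proof -
  have decaying: "decaying_family a C N \<phi>" and orth: "orthonormal_or_zero \<phi>"
    and kernel: "\<And>m. proj_kernel \<phi> m = delta m"
    and eig: "\<And>l. \<phi> l \<noteq> (\<lambda>_. 0) \<Longrightarrow> \<exists>E. \<forall>n. schrodinger V (\<phi> l) n = E * \<phi> l n"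
    using loc unfolding localized_eigenbasis_def by blast+
  have fam: "orthonormal_l1_family \<phi> (C * infsum (decay a) (UNIV :: ('d \<Rightarrow> int) set))"
    by (rule decaying_family_orthonormal_l1[OF decaying a C orth])
  define c where "c u = fst (SOME l. \<phi> l = u)" for u
  have "cmod (u m) \<le> C * exp (- a * znorm (m - c u))" if "u \<in> nonzero_members \<phi>" for u m
  proof -
    have "\<exists>l. \<phi> l = u" using that by (auto simp: nonzero_members_def)
    hence "\<phi> (SOME l. \<phi> l = u) = u" by (rule someI_ex)
    thus ?thesis
      using decaying_familyD[OF decaying, of "SOME l. \<phi> l = u" m] by (simp add: c_def decay_def)
  qed
  moreover have "is_eigenfunction (schrodinger V) u" if u: "u \<in> nonzero_members \<phi>" for u
  proof -
    obtain l where l: "u = \<phi> l" "\<phi> l \<noteq> (\<lambda>_. 0)" using u unfolding nonzero_members_def by blast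
    thus ?thesis using eig[OF l(2)] orthonormal_l1_family_l2[OF fam] by (auto simp: is_eigenfunction_def)
  qed
  ultimately show ?thesis
    unfolding ULE_with_def using complete_if_proj_kernel_eq_delta[OF fam kernel] by blast
qed

lemma l2_inner_translate:
  fixes u v :: "('d::finite \<Rightarrow> int) \<Rightarrow> complex"
  shows "l2_inner (\<lambda>n. u (n + s)) (\<lambda>n. v (n + s)) = l2_inner u v"
  unfolding l2_inner_def
  by (rule infsum_reindex_bij_betw[OF bij_betw_translate, where f = "\<lambda>n. u n * cnj (v n)"])

lemma orthonormal_or_zero_translate:
  fixes \<psi> :: "'i \<Rightarrow> ('d::finite \<Rightarrow> int) \<Rightarrow> complex"
  assumes "orthonormal_or_zero \<psi>"
  shows "orthonormal_or_zero (\<lambda>i n. \<psi> i (n + s))"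
proof -
  have "(\<lambda>n. \<psi> i (n + s)) = (\<lambda>_. 0) \<longleftrightarrow> \<psi> i = (\<lambda>_. 0)" for i
    unfolding fun_eq_iff by (metis diff_add_cancel)
  thus ?thesis using assms unfolding orthonormal_or_zero_def by (simp add: l2_inner_translate)
qed

lemma orthonormal_or_zero_reindex:
  assumes "inj \<tau>" "orthonormal_or_zero \<psi>"
  shows "orthonormal_or_zero (\<lambda>i. \<psi> (\<tau> i))"
  using assms unfolding orthonormal_or_zero_def by (simp add: inj_eq)

lemma proj_kernel_reindex:
  assumes "bij_betw \<tau> UNIV UNIV"
  shows "proj_kernel (\<lambda>l. \<psi> (\<tau> l)) = proj_kernel \<psi>"
proof (intro ext)
  show "proj_kernel (\<lambda>l. \<psi> (\<tau> l)) m n = proj_kernel \<psi> m n" for m n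
    unfolding proj_kernel_def
    by (rule infsum_reindex_bij_betw[OF assms, where f = "\<lambda>l. cnj (\<psi> l m) * \<psi> l n"])
qed

lemma localized_eigenbasis_translate:
  fixes V :: "('d::finite \<Rightarrow> int) \<Rightarrow> real"
  assumes loc: "localized_eigenbasis a C N V \<Phi>"
  shows "localized_eigenbasis a C N (\<lambda>n. V (n + s)) (\<lambda>l n. \<Phi> (fst l + s, snd l) (n + s))"
proof -
  define \<tau> where "\<tau> l = (fst l + s, snd l)" for l :: "('d \<Rightarrow> int) \<times> nat"
  define \<psi> where "\<psi> l n = \<Phi> (\<tau> l) (n + s)" for l n
  have decaying: "decaying_family a C N \<Phi>" and orth: "orthonormal_or_zero \<Phi>"
    and kernel: "\<And>m. proj_kernel \<Phi> m = delta m"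
    and eig: "\<And>l. \<Phi> l \<noteq> (\<lambda>_. 0) \<Longrightarrow> \<exists>E. \<forall>n. schrodinger V (\<Phi> l) n = E * \<Phi> l n"
    using loc unfolding localized_eigenbasis_def by blast+
  have \<tau>: "bij_betw \<tau> UNIV UNIV"
    unfolding \<tau>_def by (rule bij_betwI[of _ _ _ "\<lambda>l. (fst l - s, snd l)"]) auto
  have \<psi>_zero: "\<psi> l = (\<lambda>_. 0) \<longleftrightarrow> \<Phi> (\<tau> l) = (\<lambda>_. 0)" for l
    unfolding \<psi>_def fun_eq_iff by (metis diff_add_cancel)
  have "decaying_family a C N \<psi>"
    unfolding decaying_family_def
  proof (intro conjI allI impI)
    fix z j n
    have "cmod (\<Phi> (z + s, j) (n + s)) \<le> C * decay a ((n + s) - (z + s))"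
      using decaying unfolding decaying_family_def by blast
    thus "cmod (\<psi> (z, j) n) \<le> C * decay a (n - z)" by (simp add: \<psi>_def \<tau>_def)
  next
    fix z j assume "N \<le> j"
    thus "\<psi> (z, j) = (\<lambda>_. 0)" using decaying by (simp add: decaying_family_def \<psi>_def \<tau>_def fun_eq_iff)
  qed
  moreover have "orthonormal_or_zero \<psi>"
    unfolding \<psi>_def[abs_def]
    by (intro orthonormal_or_zero_translate orthonormal_or_zero_reindex[OF bij_betw_imp_inj_on[OF \<tau>] orth])
  moreover have "proj_kernel \<psi> m = delta m" for m
  proof
    fix n
    have "proj_kernel \<psi> m n = proj_kernel (\<lambda>l. \<Phi> (\<tau> l)) (m + s) (n + s)"
      unfolding proj_kernel_def \<psi>_def ..
    thus "proj_kernel \<psi> m n = delta m n" by (simp add: proj_kernel_reindex[OF \<tau>] kernel delta_def)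
  qed
  moreover have "\<exists>E. \<forall>n. schrodinger (\<lambda>n. V (n + s)) (\<psi> l) n = E * \<psi> l n"
    if nz: "\<psi> l \<noteq> (\<lambda>_. 0)" for l
  proof -
    obtain E where E: "\<And>n. schrodinger V (\<Phi> (\<tau> l)) n = E * \<Phi> (\<tau> l) n"
      using eig[of "\<tau> l"] nz \<psi>_zero by blast
    have "schrodinger (\<lambda>n. V (n + s)) (\<psi> l) n = E * \<psi> l n" for n
      using schrodinger_translate[of V s "\<Phi> (\<tau> l)" n] E[of "n + s"]
      by (simp add: \<psi>_def[abs_def])
    thus ?thesis by blast
  qed
  ultimately show ?thesis unfolding localized_eigenbasis_def \<psi>_def \<tau>_def by blast
qed

section \<open>Limits of localised eigenbases\<close>

lemma decaying_family_limit:
  assumes dec: "\<And>k. decaying_family a C N (\<psi> k)" and lim: "\<And>l n. (\<lambda>k. \<psi> k l n) \<longlonglongrightarrow> \<phi> l n"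
  shows "decaying_family a C N \<phi>"
  unfolding decaying_family_def
proof (intro conjI allI impI)
  show "cmod (\<phi> (z, j) n) \<le> C * decay a (n - z)" for z j n
    by (rule norm_le_of_tendsto[OF lim]) (use dec in \<open>simp add: decaying_family_def\<close>)
  show "\<phi> (z, j) = (\<lambda>_. 0)" if "N \<le> j" for z j
  proof
    fix n
    have "(\<lambda>k. \<psi> k (z, j) n) = (\<lambda>k. 0)" using dec that by (simp add: decaying_family_def)
    thus "\<phi> (z, j) n = 0" using lim[of "(z, j)" n] LIMSEQ_unique[OF tendsto_const] by metis
  qed
qed

lemma orthonormal_or_zero_limit:
  assumes a: "0 < a" and C: "0 \<le> C"
    and dec: "\<And>k. decaying_family a C N (\<psi> k)" and orth: "\<And>k. orthonormal_or_zero (\<psi> k)"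
    and lim: "\<And>l n. (\<lambda>k. \<psi> k l n) \<longlonglongrightarrow> \<phi> l n"
  shows "orthonormal_or_zero \<phi>"
  unfolding orthonormal_or_zero_def
proof (intro allI)
  fix l l'
  have inner_lim: "(\<lambda>k. l2_inner (\<psi> k l) (\<psi> k l')) \<longlonglongrightarrow> l2_inner (\<phi> l) (\<phi> l')"
    unfolding l2_inner_def
  proof (rule infsum_dominated_convergence)
    show "(\<lambda>n. C * decay a (n - fst l) * C) summable_on UNIV"
      by (intro summable_on_cmult_left summable_on_cmult_right summable_on_decay_diff a)
    show "cmod (\<psi> k l n * cnj (\<psi> k l' n)) \<le> C * decay a (n - fst l) * C" for k n
      unfolding norm_mult complex_mod_cnj
      by (intro mult_mono decaying_familyD[OF dec] decaying_family_le_const[OF dec])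
         (use a C decay_pos[of a "n - fst l"] in auto)
  qed (intro tendsto_intros lim)
  show "l2_inner (\<phi> l) (\<phi> l') = (if l = l' \<and> \<phi> l \<noteq> (\<lambda>_. 0) then 1 else 0)"
  proof (cases "l = l' \<and> \<phi> l \<noteq> (\<lambda>_. 0)")
    case True
    then obtain n0 where "\<phi> l n0 \<noteq> 0" by (auto simp: fun_eq_iff)
    hence "eventually (\<lambda>k. \<psi> k l n0 \<noteq> 0) sequentially" by (rule tendsto_imp_eventually_ne[OF lim])
    hence "eventually (\<lambda>k. l2_inner (\<psi> k l) (\<psi> k l') = 1) sequentially"
    proof eventually_elim
      case (elim k)
      hence "\<psi> k l \<noteq> (\<lambda>_. 0)" by auto
      thus ?case using orthonormal_or_zeroD[OF orth] True by simp
    qed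
    hence "(\<lambda>k. l2_inner (\<psi> k l) (\<psi> k l')) \<longlonglongrightarrow> 1" by (rule tendsto_eventually)
    thus ?thesis using True inner_lim LIMSEQ_unique by auto
  next
    case False
    show ?thesis
    proof (cases "l = l'")
      case True
      with False show ?thesis by simp
    next
      case False
      hence "(\<lambda>k. l2_inner (\<psi> k l) (\<psi> k l')) = (\<lambda>k. 0)" by (simp add: orthonormal_or_zero_distinct[OF orth])
      hence "(\<lambda>k. 0) \<longlonglongrightarrow> l2_inner (\<phi> l) (\<phi> l')" using inner_lim by simp
      hence "l2_inner (\<phi> l) (\<phi> l') = 0" by (rule LIMSEQ_unique[OF tendsto_const, symmetric])
      thus ?thesis using False by simp
    qed
  qed
qed

lemma proj_kernel_limit:
  assumes a: "0 < a" and C: "0 \<le> C"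
    and dec: "\<And>k. decaying_family a C N (\<psi> k)" and kernel: "\<And>k m. proj_kernel (\<psi> k) m = delta m"
    and lim: "\<And>l n. (\<lambda>k. \<psi> k l n) \<longlonglongrightarrow> \<phi> l n"
  shows "proj_kernel \<phi> m = delta m"
proof
  fix n
  have "(\<lambda>k. proj_kernel (\<psi> k) m n) \<longlonglongrightarrow> proj_kernel \<phi> m n"
    unfolding proj_kernel_def
  proof (rule infsum_dominated_convergence)
    show "(\<lambda>l. slot_majorant a C N m l * C) summable_on UNIV"
      by (intro summable_on_cmult_left summable_on_slot_majorant a C)
    show "cmod (cnj (\<psi> k l m) * \<psi> k l n) \<le> slot_majorant a C N m l * C" for k l
      unfolding norm_mult complex_mod_cnj
      by (rule mult_mono[OF decaying_family_le_slot_majorant[OF dec] decaying_family_le_const[OF dec]])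
         (use a order_trans[OF norm_ge_zero decaying_family_le_slot_majorant[OF dec]] in auto)
  qed (intro tendsto_intros lim)
  hence "(\<lambda>k. delta m n) \<longlonglongrightarrow> proj_kernel \<phi> m n" by (simp add: kernel)
  thus "proj_kernel \<phi> m n = delta m n" by (rule LIMSEQ_unique[OF tendsto_const, symmetric])
qed

lemma eigenfunction_limit:
  fixes V :: "nat \<Rightarrow> ('d::finite \<Rightarrow> int) \<Rightarrow> real"
  assumes eig: "\<And>k. u k \<noteq> (\<lambda>_. 0) \<Longrightarrow> \<exists>E. \<forall>n. schrodinger (V k) (u k) n = E * u k n"
    and lim_V: "\<And>n. (\<lambda>k. V k n) \<longlonglongrightarrow> V' n" and lim_u: "\<And>n. (\<lambda>k. u k n) \<longlonglongrightarrow> u' n"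
    and nz: "u' n0 \<noteq> 0"
  shows "\<forall>n. schrodinger V' u' n = (schrodinger V' u' n0 / u' n0) * u' n"
proof
  fix n
  have H: "(\<lambda>k. schrodinger (V k) (u k) n) \<longlonglongrightarrow> schrodinger V' u' n" for n
    by (rule tendsto_schrodinger[OF lim_V lim_u])
  have "(\<lambda>k. schrodinger (V k) (u k) n0 / u k n0 * u k n) \<longlonglongrightarrow> schrodinger V' u' n0 / u' n0 * u' n"
    by (intro tendsto_intros H lim_u nz)
  moreover have "eventually (\<lambda>k. u k n0 \<noteq> 0) sequentially" by (rule tendsto_imp_eventually_ne[OF lim_u nz])
  hence "eventually (\<lambda>k. schrodinger (V k) (u k) n0 / u k n0 * u k n = schrodinger (V k) (u k) n) sequentially"
  proof eventually_elim
    case (elim k)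
    then obtain E where "\<And>n. schrodinger (V k) (u k) n = E * u k n" using eig by (metis fun_eq_iff)
    thus ?case using elim by simp
  qed
  ultimately have "(\<lambda>k. schrodinger (V k) (u k) n) \<longlonglongrightarrow> schrodinger V' u' n0 / u' n0 * u' n"
    by (rule Lim_transform_eventually)
  thus "schrodinger V' u' n = schrodinger V' u' n0 / u' n0 * u' n" using H LIMSEQ_unique by blast
qed

lemma localized_eigenbasis_limit:
  fixes V :: "nat \<Rightarrow> ('d::finite \<Rightarrow> int) \<Rightarrow> real"
  assumes a: "0 < a" and C: "0 \<le> C" and loc: "\<And>k. localized_eigenbasis a C N (V k) (\<psi> k)"
    and lim_V: "\<And>n. (\<lambda>k. V k n) \<longlonglongrightarrow> V' n" and lim: "\<And>l n. (\<lambda>k. \<psi> k l n) \<longlonglongrightarrow> \<phi> l n"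
  shows "localized_eigenbasis a C N V' \<phi>"
proof -
  have dec: "\<And>k. decaying_family a C N (\<psi> k)" and orth: "\<And>k. orthonormal_or_zero (\<psi> k)"
    and kernel: "\<And>k m. proj_kernel (\<psi> k) m = delta m"
    and eig: "\<And>k l. \<psi> k l \<noteq> (\<lambda>_. 0) \<Longrightarrow> \<exists>E. \<forall>n. schrodinger (V k) (\<psi> k l) n = E * \<psi> k l n"
    using loc unfolding localized_eigenbasis_def by blast+
  have "\<exists>E. \<forall>n. schrodinger V' (\<phi> l) n = E * \<phi> l n" if nz: "\<phi> l \<noteq> (\<lambda>_. 0)" for l
  proof -
    obtain n0 where "\<phi> l n0 \<noteq> 0" using nz by (auto simp: fun_eq_iff)
    from eigenfunction_limit[OF eig lim_V lim this] show ?thesis by blast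
  qed
  thus ?thesis
    unfolding localized_eigenbasis_def
    using decaying_family_limit[OF dec lim] orthonormal_or_zero_limit[OF a C dec orth lim]
      proj_kernel_limit[OF a C dec kernel lim]
    by blast
qed

lemma bounded_pointwise_convergent_subseq:
  fixes x :: "nat \<Rightarrow> 'i::countable \<Rightarrow> complex"
  assumes bounded: "\<And>k i. cmod (x k i) \<le> C"
  obtains r y where "strict_mono r" "\<And>i. (\<lambda>k. x (r k) i) \<longlonglongrightarrow> y i"
proof -
  define K where "K = PiE (UNIV :: 'i set) (\<lambda>_. cball (0 :: complex) C)"
  have "compactin (product_topology (\<lambda>_. euclidean) UNIV) K"
    unfolding K_def by (subst compactin_PiE) auto
  hence "seq_compact K" by (simp add: euclidean_product_topology compact_imp_seq_compact)
  moreover have "\<forall>k. x k \<in> K" unfolding K_def using bounded by (auto simp: PiE_def)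
  ultimately obtain y r where r: "strict_mono r" and lim: "(x \<circ> r) \<longlonglongrightarrow> y"
    using seq_compactE by metis
  have "(\<lambda>k. x (r k) i) \<longlonglongrightarrow> y i" for i
    using continuous_on_tendsto_compose[OF continuous_on_product_coordinates[of i] lim]
    by (simp add: o_def)
  with r show ?thesis using that by blast
qed

text \<open>The ULE constants survive the limit because the localised eigenbases, bounded by \<open>C\<close>,
  have a pointwise convergent subsequence.\<close>

lemma ULE_if_localized_eigenbases_converge:
  fixes V :: "nat \<Rightarrow> ('d::finite \<Rightarrow> int) \<Rightarrow> real"
  assumes a: "0 < a" and C: "0 \<le> C" and loc: "\<And>k. localized_eigenbasis a C N (V k) (\<psi> k)"
    and lim_V: "\<And>n. (\<lambda>k. V k n) \<longlonglongrightarrow> V' n"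
  shows "ULE_with a C (schrodinger V')"
proof -
  have "cmod (\<psi> k l n) \<le> C" for k l n
    using loc[of k] a by (intro decaying_family_le_const) (auto simp: localized_eigenbasis_def)
  hence "cmod (case_prod (\<psi> k) i) \<le> C" for k i by (simp add: case_prod_beta)
  then obtain r \<phi> where r: "strict_mono r" and lim: "\<And>i. (\<lambda>k. case_prod (\<psi> (r k)) i) \<longlonglongrightarrow> \<phi> i"
    using bounded_pointwise_convergent_subseq[of "\<lambda>k. case_prod (\<psi> k)"] by blast
  have "localized_eigenbasis a C N V' (\<lambda>l n. \<phi> (l, n))"
  proof (rule localized_eigenbasis_limit[OF a C loc])
    show "(\<lambda>k. V (r k) n) \<longlonglongrightarrow> V' n" for n
      using LIMSEQ_subseq_LIMSEQ[OF lim_V r] by (simp add: o_def)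
    show "(\<lambda>k. \<psi> (r k) l n) \<longlonglongrightarrow> \<phi> (l, n)" for l n
      using lim[of "(l, n)"] by simp
  qed
  thus ?thesis by (rule ULE_if_localized_eigenbasis[OF a C])
qed

section \<open>The lattice action\<close>

lemma funpow_commute:
  assumes commute: "x \<circ> g = g \<circ> x"
  shows "x \<circ> (g ^^ n) = (g ^^ n) \<circ> x"
proof (induction n)
  case (Suc n)
  have "x \<circ> (g ^^ Suc n) = (x \<circ> g) \<circ> (g ^^ n)" by (simp add: comp_assoc)
  also have "\<dots> = g \<circ> (x \<circ> (g ^^ n))" unfolding commute by (simp add: comp_assoc)
  also have "\<dots> = g \<circ> ((g ^^ n) \<circ> x)" unfolding Suc ..
  also have "\<dots> = (g ^^ Suc n) \<circ> x" by (simp add: comp_assoc)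
  finally show ?case .
qed simp

lemma continuous_on_funpow:
  fixes g :: "'a::topological_space \<Rightarrow> 'a"
  assumes "continuous_on UNIV g"
  shows "continuous_on UNIV (g ^^ n)"
proof (induction n)
  case (Suc n)
  have "continuous_on UNIV (g \<circ> (g ^^ n))"
    by (rule continuous_on_compose[OF Suc continuous_on_subset[OF assms]]) auto
  thus ?case by simp
qed (simp add: id_def)

lemma bij_comp_inv: "bij g \<Longrightarrow> g \<circ> inv g = id"
  and bij_inv_comp: "bij g \<Longrightarrow> inv g \<circ> g = id"
  by (simp_all add: surj_iff[symmetric] inj_iff[symmetric] bij_is_surj bij_is_inj)

lemma comp_inv_commute:
  assumes g: "bij g" and commute: "x \<circ> g = g \<circ> x"
  shows "x \<circ> inv g = inv g \<circ> x"
proof -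
  have "x \<circ> inv g = (inv g \<circ> g) \<circ> x \<circ> inv g" using bij_inv_comp[OF g] by simp
  also have "\<dots> = inv g \<circ> (x \<circ> g) \<circ> inv g" unfolding commute by (simp add: comp_assoc)
  also have "\<dots> = inv g \<circ> x \<circ> (g \<circ> inv g)" by (simp add: comp_assoc)
  also have "\<dots> = inv g \<circ> x" using bij_comp_inv[OF g] by simp
  finally show ?thesis .
qed

lemma iter_int_commute:
  assumes "bij g" "x \<circ> g = g \<circ> x"
  shows "x \<circ> iter_int g k = iter_int g k \<circ> x"
  unfolding iter_int_def using funpow_commute[OF assms(2)] funpow_commute[OF comp_inv_commute[OF assms]]
  by simp

lemma iter_int_succ:
  assumes g: "bij g"
  shows "iter_int g (k + 1) = g \<circ> iter_int g k"
proof (cases "0 \<le> k")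
  case True
  hence "nat (k + 1) = Suc (nat k)" by simp
  thus ?thesis using True by (simp add: iter_int_def)
next
  case False
  show ?thesis
  proof (cases "k = -1")
    case True
    thus ?thesis using bij_comp_inv[OF g] by (simp add: iter_int_def)
  next
    case k: False
    hence "nat (- k) = Suc (nat (- (k + 1)))" using False by simp
    hence "iter_int g k = inv g \<circ> iter_int g (k + 1)"
      using False k by (simp add: iter_int_def)
    hence "g \<circ> iter_int g k = (g \<circ> inv g) \<circ> iter_int g (k + 1)" by (simp add: comp_assoc)
    thus ?thesis using bij_comp_inv[OF g] by simp
  qed
qed

lemma iter_int_pred:
  assumes g: "bij g"
  shows "iter_int g (k - 1) = inv g \<circ> iter_int g k"
proof -
  have "inv g \<circ> iter_int g k = (inv g \<circ> g) \<circ> iter_int g (k - 1)"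
    using iter_int_succ[OF g, of "k - 1"] by (simp add: comp_assoc)
  thus ?thesis using bij_inv_comp[OF g] by simp
qed

lemma iter_int_add:
  assumes g: "bij g"
  shows "iter_int g (a + b) = iter_int g a \<circ> iter_int g b"
proof (induction a rule: int_induct[where k = 0])
  case (step1 i)
  have "iter_int g (i + 1 + b) = g \<circ> iter_int g (i + b)"
    using iter_int_succ[OF g, of "i + b"] by (simp add: algebra_simps)
  thus ?case by (simp add: step1 iter_int_succ[OF g] comp_assoc)
next
  case (step2 i)
  have "iter_int g (i - 1 + b) = inv g \<circ> iter_int g (i + b)"
    using iter_int_pred[OF g, of "i + b"] by (simp add: algebra_simps)
  thus ?case by (simp add: step2 iter_int_pred[OF g] comp_assoc)
qed (simp add: iter_int_def)

lemma iter_int_iter_int_commute: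
  assumes "bij g" "bij h" "g \<circ> h = h \<circ> g"
  shows "iter_int g a \<circ> iter_int h b = iter_int h b \<circ> iter_int g a"
proof -
  have "h \<circ> iter_int g a = iter_int g a \<circ> h" by (rule iter_int_commute[OF assms(1) assms(3)[symmetric]])
  from iter_int_commute[OF assms(2) this[symmetric]] show ?thesis .
qed

lemma continuous_on_iter_int:
  fixes g :: "'a::topological_space \<Rightarrow> 'a"
  assumes "continuous_on UNIV g" "continuous_on UNIV (inv g)"
  shows "continuous_on UNIV (iter_int g k)"
  unfolding iter_int_def using continuous_on_funpow[OF assms(1)] continuous_on_funpow[OF assms(2)]
  by auto

text \<open>With countably many continuous observables, a dense set contains a sequence along which
  all of them converge to their values at a given point: at stage \<open>k\<close> pick a point of the set
  in the open neighbourhood where the first \<open>k\<close> observables are \<open>1/(k+1)\<close>-close.\<close>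

lemma dense_pointwise_approximation:
  fixes g :: "'n::countable \<Rightarrow> 'a::topological_space \<Rightarrow> real"
  assumes cont: "\<And>n. continuous_on UNIV (g n)" and dense: "closure D = UNIV"
  obtains x where "\<And>k. x k \<in> D" "\<And>n. (\<lambda>k. g n (x k)) \<longlonglongrightarrow> g n \<omega>"
proof -
  define U where "U k = (\<Inter>n\<in>from_nat ` {..k}. g n -` ball (g n \<omega>) (inverse (real (Suc k))))" for k
  have "open (U k)" for k
    unfolding U_def using cont by (intro open_INT ballI finite_imageI) (auto simp: continuous_on_open_vimage)
  moreover have "\<omega> \<in> U k" for k unfolding U_def by auto
  ultimately have "U k \<inter> D \<noteq> {}" for k using dense open_Int_closure_eq_empty by blast
  hence "\<forall>k. \<exists>y. y \<in> D \<and> y \<in> U k" by blast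
  then obtain x where x: "\<And>k. x k \<in> D" "\<And>k. x k \<in> U k" by metis
  have "(\<lambda>k. g n (x k)) \<longlonglongrightarrow> g n \<omega>" for n
  proof (rule metric_LIMSEQ_I)
    fix r :: real assume "0 < r"
    then obtain k0 where k0: "inverse (real (Suc k0)) < r" using reals_Archimedean by blast
    have "dist (g n (x k)) (g n \<omega>) < r" if k: "k \<ge> max k0 (to_nat n)" for k
    proof -
      have "to_nat n \<le> k" using k by simp
      hence "n \<in> from_nat ` {..k}" by (metis atMost_iff from_nat_to_nat image_eqI)
      hence "dist (g n (x k)) (g n \<omega>) < inverse (real (Suc k))"
        using x(2)[of k] unfolding U_def by (auto simp: dist_commute)
      also have "\<dots> \<le> inverse (real (Suc k0))" using k by (simp add: le_imp_inverse_le)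
      finally show ?thesis using k0 by simp
    qed
    thus "\<exists>k0. \<forall>k\<ge>k0. dist (g n (x k)) (g n \<omega>) < r" by blast
  qed
  with x(1) show ?thesis using that by blast
qed

locale commuting_homeomorphisms =
  fixes T :: "'d::finite \<Rightarrow> 'a::topological_space \<Rightarrow> 'a"
  assumes homeo: "\<And>i. \<exists>g. homeomorphism UNIV UNIV (T i) g"
    and commute: "\<And>i j. T i \<circ> T j = T j \<circ> T i"
begin

lemma bij: "bij (T i)"
  and continuous: "continuous_on UNIV (T i)" and continuous_inv: "continuous_on UNIV (inv (T i))"
proof -
  obtain g where g: "homeomorphism UNIV UNIV (T i) g" using homeo by blast
  hence left: "\<And>x. g (T i x) = x" and right: "\<And>y. T i (g y) = y"
    and "continuous_on UNIV (T i)" "continuous_on UNIV g"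
    by (auto simp: homeomorphism_def)
  moreover have "inv (T i) = g" by (rule inv_equality) (use left right in auto)
  moreover have "bij (T i)" by (rule bij_betwI[of _ _ _ g]) (use left right in auto)
  ultimately show "bij (T i)" "continuous_on UNIV (T i)" "continuous_on UNIV (inv (T i))" by simp_all
qed

text \<open>\<open>Tpow_on S n\<close> is the partial product \<open>\<Prod>\<^sub>i\<^sub>\<in>\<^sub>S T\<^sub>i\<^sup>n\<^sup>i\<close>, so that properties of \<open>Tpow\<close> can be
  proved by induction over the coordinates.\<close>

definition Tpow_on :: "'d set \<Rightarrow> ('d \<Rightarrow> int) \<Rightarrow> 'a \<Rightarrow> 'a" where
  "Tpow_on S n = Finite_Set.fold (\<lambda>i h. iter_int (T i) (n i) \<circ> h) id S"

lemma Tpow_eq_Tpow_on: "Tpow T n = Tpow_on UNIV n"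
  unfolding Tpow_def Tpow_on_def ..

lemma Tpow_on_empty [simp]: "Tpow_on {} n = id"
  unfolding Tpow_on_def by simp

lemma Tpow_on_insert:
  assumes "finite S" "i \<notin> S"
  shows "Tpow_on (insert i S) n = iter_int (T i) (n i) \<circ> Tpow_on S n"
proof -
  have "comp_fun_commute_on UNIV (\<lambda>i h. iter_int (T i) (n i) \<circ> h)"
    by unfold_locales (auto simp: fun_eq_iff, metis iter_int_iter_int_commute[OF bij bij commute] comp_apply)
  thus ?thesis unfolding Tpow_on_def by (rule comp_fun_commute_on.fold_insert) (use assms in auto)
qed

lemma continuous_on_Tpow_on: "finite S \<Longrightarrow> continuous_on UNIV (Tpow_on S n)"
proof (induction S rule: finite_induct)
  case (insert i S)
  have "continuous_on UNIV (iter_int (T i) (n i) \<circ> Tpow_on S n)"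
    by (rule continuous_on_compose[OF insert.IH continuous_on_subset])
       (auto intro: continuous_on_iter_int continuous continuous_inv)
  thus ?case by (simp add: Tpow_on_insert insert.hyps)
qed (simp add: id_def)

lemma Tpow_on_commute: "finite S \<Longrightarrow> Tpow_on S n \<circ> iter_int (T j) b = iter_int (T j) b \<circ> Tpow_on S n"
proof (induction S rule: finite_induct)
  case (insert i S)
  have "(iter_int (T i) (n i) \<circ> Tpow_on S n) \<circ> iter_int (T j) b
      = iter_int (T i) (n i) \<circ> (Tpow_on S n \<circ> iter_int (T j) b)"
    by (simp add: comp_assoc)
  also have "\<dots> = (iter_int (T i) (n i) \<circ> iter_int (T j) b) \<circ> Tpow_on S n"
    unfolding insert.IH by (simp add: comp_assoc)
  also have "\<dots> = iter_int (T j) b \<circ> (iter_int (T i) (n i) \<circ> Tpow_on S n)"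
    unfolding iter_int_iter_int_commute[OF bij bij commute, of i _ j] by (simp add: comp_assoc)
  finally show ?case by (simp only: Tpow_on_insert[OF insert.hyps])
qed simp

lemma Tpow_on_add: "finite S \<Longrightarrow> Tpow_on S (m + s) = Tpow_on S m \<circ> Tpow_on S s"
proof (induction S rule: finite_induct)
  case (insert i S)
  have "iter_int (T i) ((m + s) i) \<circ> Tpow_on S (m + s)
      = iter_int (T i) (m i) \<circ> iter_int (T i) (s i) \<circ> (Tpow_on S m \<circ> Tpow_on S s)"
    unfolding insert.IH by (simp add: iter_int_add[OF bij])
  also have "\<dots> = iter_int (T i) (m i) \<circ> (iter_int (T i) (s i) \<circ> Tpow_on S m) \<circ> Tpow_on S s"
    by (simp add: comp_assoc)
  also have "iter_int (T i) (s i) \<circ> Tpow_on S m = Tpow_on S m \<circ> iter_int (T i) (s i)"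
    by (rule Tpow_on_commute[OF insert.hyps(1), symmetric])
  finally show ?case by (simp only: Tpow_on_insert[OF insert.hyps] comp_assoc)
qed simp

lemma continuous_on_Tpow: "continuous_on UNIV (Tpow T n)"
  unfolding Tpow_eq_Tpow_on by (rule continuous_on_Tpow_on) simp

lemma Tpow_add: "Tpow T (m + s) x = Tpow T m (Tpow T s x)"
  unfolding Tpow_eq_Tpow_on using Tpow_on_add[of UNIV m s] by simp

lemma minimal_action_translates_converge:
  fixes f :: "'a \<Rightarrow> real"
  assumes minimal: "minimal_action T" and cont: "continuous_on UNIV f"
  obtains s where "\<And>n. (\<lambda>k. f (Tpow T (n + s k) \<omega>\<^sub>0)) \<longlonglongrightarrow> f (Tpow T n \<omega>)"
proof -
  have cont_n: "continuous_on UNIV (\<lambda>x. f (Tpow T n x))" for n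
    using continuous_on_compose[OF continuous_on_Tpow continuous_on_subset[OF cont]] by (simp add: o_def)
  have dense: "closure {Tpow T n \<omega>\<^sub>0 | n. True} = UNIV"
    using minimal by (simp add: minimal_action_def)
  obtain x where orbit: "\<And>k. x k \<in> {Tpow T n \<omega>\<^sub>0 | n. True}"
    and lim: "\<And>n. (\<lambda>k. f (Tpow T n (x k))) \<longlonglongrightarrow> f (Tpow T n \<omega>)"
    using dense_pointwise_approximation[where g = "\<lambda>n x. f (Tpow T n x)" and \<omega> = \<omega>, OF cont_n dense]
    by blast
  have "\<forall>k. \<exists>n. x k = Tpow T n \<omega>\<^sub>0" using orbit by blast
  then obtain s where s: "\<And>k. x k = Tpow T (s k) \<omega>\<^sub>0" by metis
  show ?thesis
  proof (rule that)
    show "(\<lambda>k. f (Tpow T (n + s k) \<omega>\<^sub>0)) \<longlonglongrightarrow> f (Tpow T n \<omega>)" for n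
      using lim[of n] by (simp add: s Tpow_add)
  qed
qed

end

theorem theorem1p1:
  fixes T :: "'d::finite \<Rightarrow> 'a::topological_space \<Rightarrow> 'a"
    and f :: "'a \<Rightarrow> real" and \<omega>\<^sub>0 :: 'a
  assumes homeo: "\<And>i. \<exists>g. homeomorphism UNIV UNIV (T i) g"
    and comm: "\<And>i j. T i \<circ> T j = T j \<circ> T i"
    and minimal: "minimal_action T"
    and cont: "continuous_on UNIV f"
    and ule: "has_ULE (schr_op f T \<omega>\<^sub>0)"
  shows "\<exists>\<alpha>>0. \<exists>C>0. \<forall>\<omega>. ULE_with \<alpha> C (schr_op f T \<omega>)"
proof -
  interpret commuting_homeomorphisms T by (rule commuting_homeomorphisms.intro) (fact homeo comm)+
  obtain a C where a: "0 < a" and C: "0 < C" and ule0: "ULE_with a C (schr_op f T \<omega>\<^sub>0)"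
    using ule unfolding has_ULE_def by blast
  define V\<^sub>0 where "V\<^sub>0 n = f (Tpow T n \<omega>\<^sub>0)" for n
  obtain N \<Phi> where loc: "localized_eigenbasis a C N V\<^sub>0 \<Phi>"
    using localized_eigenbasis_if_ULE[OF a C ule0[unfolded schr_op_eq_schrodinger, folded V\<^sub>0_def]]
    by blast
  have "ULE_with a C (schr_op f T \<omega>)" for \<omega>
  proof -
    obtain s where s: "\<And>n. (\<lambda>k. f (Tpow T (n + s k) \<omega>\<^sub>0)) \<longlonglongrightarrow> f (Tpow T n \<omega>)"
      using minimal_action_translates_converge[OF minimal cont, where \<omega>\<^sub>0 = \<omega>\<^sub>0 and \<omega> = \<omega>] by blast
    have "localized_eigenbasis a C N (\<lambda>n. V\<^sub>0 (n + s k)) (\<lambda>l n. \<Phi> (fst l + s k, snd l) (n + s k))" for k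
      by (rule localized_eigenbasis_translate[OF loc])
    hence "ULE_with a C (schrodinger (\<lambda>n. f (Tpow T n \<omega>)))"
      by (rule ULE_if_localized_eigenbases_converge[OF a less_imp_le[OF C]]) (use s in \<open>simp add: V\<^sub>0_def\<close>)
    thus ?thesis by (simp add: schr_op_eq_schrodinger)
  qed
  with a C show ?thesis by blast
qed

end
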